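(* Let $N,s,h$ be natural numbers with $s\ge\underline{s}:=h+\max(m_{sum},m_{lb})-1$, $N_{lb}\mid N$ and $L_{sb}\mid h$. Assume $N,s,h,m_{sum},m_{lb},N_{lb},L_{sb},K_{sb}$, the sets $\alpha_{sb}(0),\ldots,\alpha_{sb}(K_{sb})$, the function $f_{sb}$ and the bounded functions $f_{sum},f_{lb}$ are fixed. Let, for every $n$, $\varepsilon_1,\ldots,\varepsilon_n$ have a joint distribution (series scheme) such that for all $1\le i\le N$, $0\le j\le K_{sb}+2$, $$\frac{1}{\sqrt{n}}\mathcal{X}^{(N,s,h)}_i(j)\xrightarrow{\mathbf{P}}x_i(j),\quad n\to\infty,$$ for some real numbers $x_i(j)$. For $1\le k\le N_{lb}$, $0\le j\le K_{sb}+2$ put $y_k(j)=\sum_{i=1}^{N/N_{lb}}x_{\frac{N}{N_{lb}}(k-1)+i}(j)$, and $$c_{sum}=\sum_{k=1}^{N_{lb}}y_k(K_{sb}+2),\quad c_{lb}=\sum_{k=1}^{N_{lb}}(y_k(K_{sb}+1))^2,\quad c_{sb}=\sum_{j=0}^{K_{sb}}\Big(\sum_{k=1}^{N_{lb}}y_k(j)\Big)^2.$$ If $c_{sum}\ne0$, then $T_{sum}\xrightarrow{\mathbf{P}}\mathrm{sgn}(c_{sum})\cdot(+\infty)$ as $n\to\infty$. If $c_{lb}\ne0$, then $T_{lb}\xrightarrow{\mathbf{P}}+\infty$. If $c_{sb}\ne0$, then $T_{sb}\xrightarrow{\mathbf{P}}+\infty$.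
   Context: Let $\mathfrak{X}\subset\mathbb{R}^d$ (Borel $\sigma$-algebra) and $\mathbf{P}_0$ a fixed distribution on $\mathfrak{X}$; under $H_0$ the $\varepsilon_i$ are i.i.d. with law $\mathbf{P}_0$, and $\mathbf{E}_{H_0},\mathbf{D}_{H_0},\mathrm{cov}_{H_0},\mathbf{P}_{H_0}$ are computed under $H_0$ (these define the constants below, while probabilities in the claim refer to the given series scheme). $[x]$ is the integer part. Fix natural numbers $m_{sum},m_{lb},N_{lb},L_{sb},K_{sb}$, measurable $f_{sum}:\mathfrak{X}^{m_{sum}}\to\mathbb{R}$, $f_{lb}:\mathfrak{X}^{m_{lb}}\to\mathbb{R}$, $f_{sb}:\mathfrak{X}^{L_{sb}}\to\mathbb{R}$, and a partition of $f_{sb}(\mathfrak{X}^{L_{sb}})$ into nonempty disjoint measurable sets $\alpha_{sb}(0),\ldots,\alpha_{sb}(K_{sb})$. $E_{sum}=\mathbf{E}_{H_0}f_{sum}(\varepsilon_1,\ldots,\varepsilon_{m_{sum}})$, $\sigma^2_{sum}=\mathbf{D}_{H_0}f_{sum}(\varepsilon_1,\ldots,\varepsilon_{m_{sum}})+2\sum_{i=2}^{m_{sum}}\mathrm{cov}_{H_0}(f_{sum}(\varepsilon_i,\ldots,\varepsilon_{i+m_{sum}-1}),f_{sum}(\varepsilon_1,\ldots,\varepsilon_{m_{sum}}))$, $\sigma_{sum}\ge0$, $T_{sum}=\frac{\sum_{i=1}^{n-m_{sum}+1}(f_{sum}(\varepsilon_i,\ldots,\varepsilon_{i+m_{sum}-1})-E_{sum})}{\sigma_{sum}\sqrt{n-m_{sum}+1}}$.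 $L_{lb}=[n/N_{lb}]$, $W_k=\sum_{j=L_{lb}(k-1)+1}^{L_{lb}k-m_{lb}+1}f_{lb}(\varepsilon_j,\ldots,\varepsilon_{j+m_{lb}-1})$, $E_{lb},\sigma_{lb}$ defined from $f_{lb},m_{lb}$ as $E_{sum},\sigma_{sum}$, $T_{lb}=\sum_{k=1}^{N_{lb}}\frac{(W_k-(L_{lb}-m_{lb}+1)E_{lb})^2}{L_{lb}\sigma_{lb}^2}$. $N_{sb}=[n/L_{sb}]$, $w(j)=\sum_{i=1}^{N_{sb}}I\{f_{sb}(\varepsilon_{L_{sb}(i-1)+1},\ldots,\varepsilon_{L_{sb}i})\in\alpha_{sb}(j)\}$, $E_{sb}(j)=\mathbf{P}_{H_0}(f_{sb}(\varepsilon_1,\ldots,\varepsilon_{L_{sb}})\in\alpha_{sb}(j))$, $T_{sb}=\sum_{j=0}^{K_{sb}}\frac{(w(j)-N_{sb}E_{sb}(j))^2}{N_{sb}E_{sb}(j)}$. Standing assumption: $\sigma_{sum},\sigma_{lb}\in(0,\infty)$, all $E_{sb}(j)>0$. $L=[n/N]$. For $\theta\in\mathfrak{X}^s$: $f^{(s)}_j(\theta)=E_{sb}(j)^{-1/2}\sum_{u=1}^{h/L_{sb}}I\{f_{sb}(\theta_{L_{sb}(u-1)+1},\ldots,\theta_{L_{sb}u})\in\alpha_{sb}(j)\}$ ($0\le j\le K_{sb}$), $f^{(s)}_{K_{sb}+1}(\theta)=\sigma_{lb}^{-1}\sum_{u=1}^hf_{lb}(\theta_u,\ldots,\theta_{u+m_{lb}-1})$,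 $f^{(s)}_{K_{sb}+2}(\theta)=\sigma_{sum}^{-1}\sum_{u=1}^hf_{sum}(\theta_u,\ldots,\theta_{u+m_{sum}-1})$. For $1\le i\le N$: $\mathcal{X}^{(N,s,h)}_i(j)=n^{-1/2}\sum_{t\in\mathbb{Z}:\ L(i-1)/h\le t\le(Li-s)/h}\big(f^{(s)}_j(\varepsilon_{ht+1},\ldots,\varepsilon_{ht+s})-\mathbf{E}_{H_0}f^{(s)}_j(\varepsilon_1,\ldots,\varepsilon_s)\big)$. *)

theory Defs
  imports "HOL-Probability.Probability"
begin

text \<open>Fixed parameters of the three tests.  A function of m arguments
 f(x_1,...,x_m) is represented as a function on nat => 'a, applied to
 the restricted window (indices 0..m-1).\<close>

record 'a cfg =
  P0 :: "'a measure"
  msum :: nat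
  fsum :: "(nat \<Rightarrow> 'a) \<Rightarrow> real"
  mlb :: nat
  flb :: "(nat \<Rightarrow> 'a) \<Rightarrow> real"
  Nlb :: nat
  Lsb :: nat
  Ksb :: nat
  fsb :: "(nat \<Rightarrow> 'a) \<Rightarrow> real"
  alpha :: "nat \<Rightarrow> real set"

definition win :: "(nat \<Rightarrow> 'a) \<Rightarrow> nat \<Rightarrow> nat \<Rightarrow> (nat \<Rightarrow> 'a)" where
  "win e a m = restrict (\<lambda>k. e (a + k)) {..<m}"

definition H0 :: "'a measure \<Rightarrow> (nat \<Rightarrow> 'a) measure" where
  "H0 P = PiM UNIV (\<lambda>_. P)"

definition EH0 :: "'a measure \<Rightarrow> ((nat \<Rightarrow> 'a) \<Rightarrow> real) \<Rightarrow> real" where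
  "EH0 P g = integral\<^sup>L (H0 P) g"

definition covH0 :: "'a measure \<Rightarrow> ((nat \<Rightarrow> 'a) \<Rightarrow> real) \<Rightarrow> ((nat \<Rightarrow> 'a) \<Rightarrow> real) \<Rightarrow> real" where
  "covH0 P g1 g2 = EH0 P (\<lambda>w. g1 w * g2 w) - EH0 P g1 * EH0 P g2"

definition Emean :: "'a measure \<Rightarrow> ((nat \<Rightarrow> 'a) \<Rightarrow> real) \<Rightarrow> nat \<Rightarrow> real" where
  "Emean P f m = EH0 P (\<lambda>w. f (win w 1 m))"

definition sigma2 :: "'a measure \<Rightarrow> ((nat \<Rightarrow> 'a) \<Rightarrow> real) \<Rightarrow> nat \<Rightarrow> real" where
  "sigma2 P f m = covH0 P (\<lambda>w. f (win w 1 m)) (\<lambda>w. f (win w 1 m))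
     + 2 * (\<Sum>i=2..m. covH0 P (\<lambda>w. f (win w i m)) (\<lambda>w. f (win w 1 m)))"

definition sigma :: "'a measure \<Rightarrow> ((nat \<Rightarrow> 'a) \<Rightarrow> real) \<Rightarrow> nat \<Rightarrow> real" where
  "sigma P f m = sqrt (sigma2 P f m)"

definition Esb :: "'a cfg \<Rightarrow> nat \<Rightarrow> real" where
  "Esb C j = measure (H0 (P0 C))
     {w \<in> space (H0 (P0 C)). fsb C (win w 1 (Lsb C)) \<in> alpha C j}"

text \<open>The statistics, evaluated at a sample e (eps_i = e i, 1 <= i <= n).\<close>
definition Tsum :: "'a cfg \<Rightarrow> nat \<Rightarrow> (nat \<Rightarrow> 'a) \<Rightarrow> real" where
  "Tsum C n e = (\<Sum>i=1..n + 1 - msum C. fsum C (win e i (msum C)) - Emean (P0 C) (fsum C) (msum C))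
      / (sigma (P0 C) (fsum C) (msum C) * sqrt (real (n + 1 - msum C)))"

definition Wlb :: "'a cfg \<Rightarrow> nat \<Rightarrow> (nat \<Rightarrow> 'a) \<Rightarrow> nat \<Rightarrow> real" where
  "Wlb C n e k = (let L = n div Nlb C in
     (\<Sum>j = L * (k - 1) + 1 .. L * k + 1 - mlb C. flb C (win e j (mlb C))))"

definition Tlb :: "'a cfg \<Rightarrow> nat \<Rightarrow> (nat \<Rightarrow> 'a) \<Rightarrow> real" where
  "Tlb C n e = (let L = n div Nlb C in
     (\<Sum>k=1..Nlb C. (Wlb C n e k - (real L - real (mlb C) + 1) * Emean (P0 C) (flb C) (mlb C))\<^sup>2
        / (real L * (sigma (P0 C) (flb C) (mlb C))\<^sup>2)))"

definition wsb :: "'a cfg \<Rightarrow> nat \<Rightarrow> (nat \<Rightarrow> 'a) \<Rightarrow> nat \<Rightarrow> nat" where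
  "wsb C n e j = card {i \<in> {1..n div Lsb C}.
      fsb C (win e (Lsb C * (i - 1) + 1) (Lsb C)) \<in> alpha C j}"

definition Tsb :: "'a cfg \<Rightarrow> nat \<Rightarrow> (nat \<Rightarrow> 'a) \<Rightarrow> real" where
  "Tsb C n e = (let Nsb = n div Lsb C in
     (\<Sum>j=0..Ksb C. (real (wsb C n e j) - real Nsb * Esb C j)\<^sup>2 / (real Nsb * Esb C j)))"

text \<open>f^{(s)}_j(theta), theta = (theta_1, ..., theta_s) given as theta k, 1 <= k <= s.\<close>
definition fs :: "'a cfg \<Rightarrow> nat \<Rightarrow> nat \<Rightarrow> (nat \<Rightarrow> 'a) \<Rightarrow> real" where
  "fs C h j \<theta> =
    (if j \<le> Ksb C then
       (\<Sum>u=1..h div Lsb C. if fsb C (win \<theta> (Lsb C * (u - 1) + 1) (Lsb C)) \<in> alpha C j then 1 else 0)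
         / sqrt (Esb C j)
     else if j = Ksb C + 1 then (\<Sum>u=1..h. flb C (win \<theta> u (mlb C))) / sigma (P0 C) (flb C) (mlb C)
     else (\<Sum>u=1..h. fsum C (win \<theta> u (msum C))) / sigma (P0 C) (fsum C) (msum C))"

definition Xcal :: "'a cfg \<Rightarrow> nat \<Rightarrow> nat \<Rightarrow> nat \<Rightarrow> nat \<Rightarrow> nat \<Rightarrow> nat \<Rightarrow> (nat \<Rightarrow> 'a) \<Rightarrow> real" where
  "Xcal C N s h n i j e = (let L = n div N in
     (\<Sum>t \<in> {t::nat. L * (i - 1) \<le> h * t \<and> h * t + s \<le> L * i}.
         fs C h j (\<lambda>k. e (h * t + k)) - EH0 (P0 C) (fs C h j)) / sqrt (real n))"

definition cvg_prob :: "(nat \<Rightarrow> 'b measure) \<Rightarrow> (nat \<Rightarrow> 'b \<Rightarrow> real) \<Rightarrow> real \<Rightarrow> bool" where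
  "cvg_prob M Y c \<longleftrightarrow> (\<forall>\<delta>>0. (\<lambda>n. measure (M n) {w \<in> space (M n). \<bar>Y n w - c\<bar> > \<delta>}) \<longlonglongrightarrow> 0)"

definition cvg_prob_pinf :: "(nat \<Rightarrow> 'b measure) \<Rightarrow> (nat \<Rightarrow> 'b \<Rightarrow> real) \<Rightarrow> bool" where
  "cvg_prob_pinf M Y \<longleftrightarrow> (\<forall>B. (\<lambda>n. measure (M n) {w \<in> space (M n). Y n w \<le> B}) \<longlonglongrightarrow> 0)"

definition cvg_prob_minf :: "(nat \<Rightarrow> 'b measure) \<Rightarrow> (nat \<Rightarrow> 'b \<Rightarrow> real) \<Rightarrow> bool" where
  "cvg_prob_minf M Y \<longleftrightarrow> (\<forall>B. (\<lambda>n. measure (M n) {w \<in> space (M n). Y n w \<ge> B}) \<longlonglongrightarrow> 0)"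

end

theory Submission
  imports Defs
begin

(* The numerator of each statistic (the centred sum in T_sum, a centred block sum W_k in T_lb, a
   centred cell count w(j) in T_sb) is a sum of centred summands over an interval of positions.
   Cut the sample into N blocks of length L = [n/N]: the windows of length s starting at multiples
   of h inside the blocks cover that interval up to boundedly many positions next to the block
   boundaries. Hence the numerator is kappa n Z_n + O(1), where Z_n is a sum of the variables
   n^(-1/2) X_i(j) over a group of blocks and kappa is sigma_sum, sigma_lb or E_sb(j)^(1/2).
   Since Z_n tends to c in probability, T_sum is at least c sqrt(n)/4 and T_lb, T_sb are at least
   c^2 n/16 on events whose probability tends to one. *)

lemma measure_abs_sum_diff_gt_le:
  fixes Z :: "'i \<Rightarrow> 'b \<Rightarrow> real"
  assumes "prob_space M" "finite I" "I \<noteq> {}" "0 < \<delta>"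
    and meas: "\<And>i. i \<in> I \<Longrightarrow> Z i \<in> borel_measurable M"
  shows "measure M {w \<in> space M. \<bar>(\<Sum>i\<in>I. Z i w) - (\<Sum>i\<in>I. c i)\<bar> > \<delta>}
    \<le> (\<Sum>i\<in>I. measure M {w \<in> space M. \<bar>Z i w - c i\<bar> > \<delta> / card I})"
proof -
  interpret prob_space M by fact
  let ?A = "\<lambda>i. {w \<in> space M. \<bar>Z i w - c i\<bar> > \<delta> / card I}"
  have card: "0 < card I" using assms by (simp add: card_gt_0_iff)
  have "\<exists>i\<in>I. \<delta> / card I < \<bar>Z i w - c i\<bar>"
    if "\<bar>(\<Sum>i\<in>I. Z i w) - (\<Sum>i\<in>I. c i)\<bar> > \<delta>" for w
  proof (rule ccontr)
    assume "\<not> ?thesis"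
    then have "\<bar>\<Sum>i\<in>I. Z i w - c i\<bar> \<le> (\<Sum>i\<in>I. \<delta> / card I)"
      by (intro order_trans[OF sum_abs sum_mono]) auto
    then show False using that card by (simp add: sum_subtractf)
  qed
  then have "{w \<in> space M. \<bar>(\<Sum>i\<in>I. Z i w) - (\<Sum>i\<in>I. c i)\<bar> > \<delta>} \<subseteq> (\<Union>i\<in>I. ?A i)"
    by blast
  moreover have sets: "?A i \<in> sets M" if "i \<in> I" for i
    by (rule borel_measurable_less) (use meas[OF that] in auto)
  ultimately have "measure M {w \<in> space M. \<bar>(\<Sum>i\<in>I. Z i w) - (\<Sum>i\<in>I. c i)\<bar> > \<delta>}
      \<le> measure M (\<Union>i\<in>I. ?A i)"
    using assms(2) by (intro finite_measure_mono sets.finite_UN) auto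
  also have "\<dots> \<le> (\<Sum>i\<in>I. measure M (?A i))"
    using sets assms(2) by (intro finite_measure_subadditive_finite) auto
  finally show ?thesis .
qed

lemma cvg_prob_sum:
  assumes M: "\<And>n. prob_space (M n)" and I: "finite I"
    and meas: "\<And>i n. i \<in> I \<Longrightarrow> Z i n \<in> borel_measurable (M n)"
    and cvg: "\<And>i. i \<in> I \<Longrightarrow> cvg_prob M (Z i) (c i)"
  shows "cvg_prob M (\<lambda>n w. \<Sum>i\<in>I. Z i n w) (\<Sum>i\<in>I. c i)"
  unfolding cvg_prob_def
proof (intro allI impI)
  fix \<delta> :: real
  assume "0 < \<delta>"
  show "(\<lambda>n. measure (M n) {w \<in> space (M n). \<bar>(\<Sum>i\<in>I. Z i n w) - (\<Sum>i\<in>I. c i)\<bar> > \<delta>}) \<longlonglongrightarrow> 0"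
  proof (cases "I = {}")
    case False
    then have "0 < \<delta> / card I" using \<open>0 < \<delta>\<close> I by (simp add: card_gt_0_iff)
    then have lim: "(\<lambda>n. \<Sum>i\<in>I. measure (M n) {w \<in> space (M n). \<bar>Z i n w - c i\<bar> > \<delta> / card I}) \<longlonglongrightarrow> 0"
      using cvg unfolding cvg_prob_def by (intro tendsto_null_sum) auto
    have "measure (M n) {w \<in> space (M n). \<bar>(\<Sum>i\<in>I. Z i n w) - (\<Sum>i\<in>I. c i)\<bar> > \<delta>}
        \<le> (\<Sum>i\<in>I. measure (M n) {w \<in> space (M n). \<bar>Z i n w - c i\<bar> > \<delta> / card I})" for n
      using meas by (intro measure_abs_sum_diff_gt_le[OF M I False \<open>0 < \<delta>\<close>])
    then show ?thesis
      by (intro tendsto_sandwich[OF _ _ tendsto_const lim] always_eventually) simp_all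
  qed (use \<open>0 < \<delta>\<close> in simp)
qed

lemma cvg_prob_uminus: "cvg_prob M Z c \<Longrightarrow> cvg_prob M (\<lambda>n w. - Z n w) (- c)"
  unfolding cvg_prob_def by (simp add: abs_minus_commute)

lemma cvg_prob_minfI:
  assumes "cvg_prob_pinf M (\<lambda>n w. - Y n w)"
  shows "cvg_prob_minf M Y"
  unfolding cvg_prob_minf_def
proof
  fix B :: real
  have "(\<lambda>n. measure (M n) {w \<in> space (M n). - Y n w \<le> - B}) \<longlonglongrightarrow> 0"
    using assms unfolding cvg_prob_pinf_def by blast
  then show "(\<lambda>n. measure (M n) {w \<in> space (M n). B \<le> Y n w}) \<longlonglongrightarrow> 0"
    by simp
qed

lemma cvg_prob_pinfI:
  assumes M: "\<And>n. prob_space (M n)" and meas: "\<And>n. Z n \<in> borel_measurable (M n)"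
    and cvg: "cvg_prob M Z c" and "0 < \<delta>"
    and lower: "\<forall>\<^sub>F n in sequentially. \<forall>w\<in>space (M n). \<bar>Z n w - c\<bar> \<le> \<delta> \<longrightarrow> \<beta> n \<le> Y n w"
    and \<beta>: "filterlim \<beta> at_top sequentially"
  shows "cvg_prob_pinf M Y"
  unfolding cvg_prob_pinf_def
proof
  fix B :: real
  have "\<forall>\<^sub>F n in sequentially. B < \<beta> n"
    using \<beta> by (simp add: filterlim_at_top_dense)
  with lower have "\<forall>\<^sub>F n in sequentially. measure (M n) {w \<in> space (M n). Y n w \<le> B}
      \<le> measure (M n) {w \<in> space (M n). \<bar>Z n w - c\<bar> > \<delta>}"
  proof eventually_elim
    case (elim n)
    interpret prob_space "M n" by (rule M)
    have "{w \<in> space (M n). \<bar>Z n w - c\<bar> > \<delta>} \<in> sets (M n)"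
      by (rule borel_measurable_less) (use meas[of n] in auto)
    moreover have "{w \<in> space (M n). Y n w \<le> B} \<subseteq> {w \<in> space (M n). \<bar>Z n w - c\<bar> > \<delta>}"
      using elim by force
    ultimately show ?case by (intro finite_measure_mono)
  qed
  moreover have "(\<lambda>n. measure (M n) {w \<in> space (M n). \<bar>Z n w - c\<bar> > \<delta>}) \<longlonglongrightarrow> 0"
    using cvg \<open>0 < \<delta>\<close> unfolding cvg_prob_def by auto
  ultimately show "(\<lambda>n. measure (M n) {w \<in> space (M n). Y n w \<le> B}) \<longlonglongrightarrow> 0"
    by (rule tendsto_sandwich[OF _ _ tendsto_const, rotated]) simp
qed

lemma dominant_term_lower_bound:
  fixes a c R V Z :: real
  assumes "\<bar>Z - c\<bar> \<le> \<bar>c\<bar> / 2" "\<bar>V - a * Z\<bar> \<le> R" "4 * R \<le> a * \<bar>c\<bar>" "0 \<le> a"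
  shows "a * \<bar>c\<bar> / 4 \<le> sgn c * V"
proof (cases c "0::real" rule: linorder_cases)
  case greater
  then have "a * (c / 2) \<le> a * Z"
    using assms(1,4) by (intro mult_left_mono) (auto simp only: abs_of_pos abs_le_iff)
  then show ?thesis
    using greater assms(2,3) by (simp only: abs_of_pos sgn_pos abs_le_iff) argo
next
  case less
  then have "a * Z \<le> a * (c / 2)"
    using assms(1,4) by (intro mult_left_mono) (auto simp only: abs_of_neg abs_le_iff)
  then show ?thesis
    using less assms(2,3) by (simp only: abs_of_neg sgn_neg abs_le_iff) argo
qed simp

lemma eventually_le_linear:
  fixes a b :: real
  assumes "0 < a"
  shows "\<forall>\<^sub>F n in sequentially. 0 < real n \<and> b \<le> a * real n"
  using filterlim_real_sequentially[unfolded filterlim_at_top, rule_format, of "max 1 (b / a)"]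
proof eventually_elim
  case (elim n)
  then have "1 \<le> real n" "b / a \<le> real n" by auto
  then show ?case using assms by (simp add: pos_divide_le_eq mult.commute)
qed

lemma sqrt_growth_lower_bound:
  fixes \<kappa> c x V :: real
  assumes "0 < \<kappa>" "0 < c" "0 < x" "\<kappa> * x * c / 4 \<le> V"
  shows "c / 4 * sqrt x \<le> V / (\<kappa> * sqrt x)"
proof -
  have "c / 4 * sqrt x = (\<kappa> * x * c / 4) / (\<kappa> * sqrt x)"
    using assms(1,3) real_div_sqrt[of x] by (simp add: field_simps)
  also have "\<dots> \<le> V / (\<kappa> * sqrt x)"
    using assms by (intro divide_right_mono) auto
  finally show ?thesis .
qed

lemma linear_growth_lower_bound:
  fixes \<kappa> c x D V :: real
  assumes "0 < \<kappa>" "0 < x" "\<kappa> * x * \<bar>c\<bar> / 4 \<le> \<bar>V\<bar>" "0 < D" "D \<le> x"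
  shows "c\<^sup>2 / 16 * x \<le> V\<^sup>2 / (D * \<kappa>\<^sup>2)"
proof -
  have "(\<kappa> * x * \<bar>c\<bar> / 4)\<^sup>2 \<le> \<bar>V\<bar>\<^sup>2"
    using assms(1-3) by (intro power_mono) simp_all
  then have sq: "(\<kappa> * x * \<bar>c\<bar> / 4)\<^sup>2 \<le> V\<^sup>2"
    by (simp only: power2_abs)
  have "c\<^sup>2 / 16 * x = (\<kappa> * x * \<bar>c\<bar> / 4)\<^sup>2 / (x * \<kappa>\<^sup>2)"
    using assms(1,2) by (simp add: field_simps power2_eq_square)
  also have "\<dots> \<le> V\<^sup>2 / (x * \<kappa>\<^sup>2)"
    using assms(2) by (intro divide_right_mono[OF sq]) simp
  also have "\<dots> \<le> V\<^sup>2 / (D * \<kappa>\<^sup>2)"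
    using assms(1,4,5) by (intro frac_le mult_right_mono) simp_all
  finally show ?thesis .
qed

lemma cvg_prob_pinf_linear_growth:
  fixes \<kappa> c R :: real
  assumes M: "\<And>n. prob_space (M n)" and meas: "\<And>n. Z n \<in> borel_measurable (M n)"
    and cvg: "cvg_prob M Z c" and "0 < c" "0 < \<kappa>"
    and approx: "\<forall>\<^sub>F n in sequentially. \<forall>w\<in>space (M n). \<bar>V n w - \<kappa> * real n * Z n w\<bar> \<le> R"
    and lower: "\<forall>\<^sub>F n in sequentially. \<forall>w\<in>space (M n).
      0 < V n w \<longrightarrow> V n w / (\<kappa> * sqrt (real n)) \<le> Y n w"
  shows "cvg_prob_pinf M Y"
proof (rule cvg_prob_pinfI[OF M meas cvg, of "c / 2" "\<lambda>n. c / 4 * sqrt (real n)"])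
  show "0 < c / 2" using \<open>0 < c\<close> by simp
  show "filterlim (\<lambda>n. c / 4 * sqrt (real n)) at_top sequentially"
    using \<open>0 < c\<close> filterlim_compose[OF sqrt_at_top filterlim_real_sequentially]
    by (intro filterlim_tendsto_pos_mult_at_top[OF tendsto_const]) auto
  show "\<forall>\<^sub>F n in sequentially. \<forall>w\<in>space (M n). \<bar>Z n w - c\<bar> \<le> c / 2 \<longrightarrow> c / 4 * sqrt (real n) \<le> Y n w"
    using approx lower eventually_le_linear[OF mult_pos_pos[OF \<open>0 < \<kappa>\<close> \<open>0 < c\<close>], of "4 * R"]
  proof eventually_elim
    case (elim n)
    show ?case
    proof (intro ballI impI)
      fix w assume w: "w \<in> space (M n)" and Z: "\<bar>Z n w - c\<bar> \<le> c / 2"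
      have V: "\<kappa> * real n * c / 4 \<le> V n w"
        using dominant_term_lower_bound[of "Z n w" c "V n w" "\<kappa> * real n" R] elim w Z
          \<open>0 < c\<close> \<open>0 < \<kappa>\<close> by (simp add: ac_simps)
      moreover have "0 < \<kappa> * real n * c / 4"
        using elim(3) \<open>0 < c\<close> \<open>0 < \<kappa>\<close> by simp
      ultimately have "V n w / (\<kappa> * sqrt (real n)) \<le> Y n w"
        using elim(2) w by auto
      moreover have "c / 4 * sqrt (real n) \<le> V n w / (\<kappa> * sqrt (real n))"
        using sqrt_growth_lower_bound[OF \<open>0 < \<kappa>\<close> \<open>0 < c\<close> _ V] elim(3) by blast
      ultimately show "c / 4 * sqrt (real n) \<le> Y n w"
        by linarith
    qed
  qed
qed

lemma cvg_prob_pinf_quadratic_growth: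
  fixes \<kappa> c R :: real
  assumes M: "\<And>n. prob_space (M n)" and meas: "\<And>n. Z n \<in> borel_measurable (M n)"
    and cvg: "cvg_prob M Z c" and "c \<noteq> 0" "0 < \<kappa>"
    and approx: "\<forall>\<^sub>F n in sequentially. \<forall>w\<in>space (M n). \<bar>V n w - \<kappa> * real n * Z n w\<bar> \<le> R"
    and lower: "\<forall>\<^sub>F n in sequentially. 0 < D n \<and> D n \<le> real n \<and>
      (\<forall>w\<in>space (M n). (V n w)\<^sup>2 / (D n * \<kappa>\<^sup>2) \<le> Y n w)"
  shows "cvg_prob_pinf M Y"
proof (rule cvg_prob_pinfI[OF M meas cvg, of "\<bar>c\<bar> / 2" "\<lambda>n. c\<^sup>2 / 16 * real n"])
  show "0 < \<bar>c\<bar> / 2" using \<open>c \<noteq> 0\<close> by simp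
  show "filterlim (\<lambda>n. c\<^sup>2 / 16 * real n) at_top sequentially"
    using \<open>c \<noteq> 0\<close> filterlim_real_sequentially
    by (intro filterlim_tendsto_pos_mult_at_top[OF tendsto_const]) auto
  have \<kappa>c: "0 < \<kappa> * \<bar>c\<bar>" using \<open>0 < \<kappa>\<close> \<open>c \<noteq> 0\<close> by simp
  show "\<forall>\<^sub>F n in sequentially. \<forall>w\<in>space (M n). \<bar>Z n w - c\<bar> \<le> \<bar>c\<bar> / 2 \<longrightarrow> c\<^sup>2 / 16 * real n \<le> Y n w"
    using approx lower eventually_le_linear[OF \<kappa>c, of "4 * R"]
  proof eventually_elim
    case (elim n)
    show ?case
    proof (intro ballI impI)
      fix w assume w: "w \<in> space (M n)" and Z: "\<bar>Z n w - c\<bar> \<le> \<bar>c\<bar> / 2"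
      have "\<kappa> * real n * \<bar>c\<bar> / 4 \<le> sgn c * V n w"
        using dominant_term_lower_bound[of "Z n w" c "V n w" "\<kappa> * real n" R] elim w Z
          \<open>0 < \<kappa>\<close> \<open>c \<noteq> 0\<close> by (simp add: ac_simps)
      also have "\<dots> \<le> \<bar>V n w\<bar>"
        by (simp add: sgn_if abs_ge_self abs_ge_minus_self)
      finally have "c\<^sup>2 / 16 * real n \<le> (V n w)\<^sup>2 / (D n * \<kappa>\<^sup>2)"
        using elim(2,3) \<open>0 < \<kappa>\<close> by (intro linear_growth_lower_bound) auto
      moreover have "(V n w)\<^sup>2 / (D n * \<kappa>\<^sup>2) \<le> Y n w"
        using elim(2) w by blast
      ultimately show "c\<^sup>2 / 16 * real n \<le> Y n w"
        by (rule order_trans)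
    qed
  qed
qed

definition block_windows :: "nat \<Rightarrow> nat \<Rightarrow> nat \<Rightarrow> nat \<Rightarrow> nat set" where
  "block_windows L h s i = {t. L * (i - 1) \<le> h * t \<and> h * t + s \<le> L * i}"

(* Positions are grouped into cells of length d, cell q consisting of the positions d(q-1)+1, ..., dq
   (d = 1 for single positions, d = Lsb for the cells of T_sb). If d divides h, the first h positions of
   the window starting after ht are the cells (h div d) t + 1, ..., (h div d) t + h div d. *)
definition covered_cells :: "nat \<Rightarrow> nat \<Rightarrow> nat \<Rightarrow> nat \<Rightarrow> nat \<Rightarrow> nat \<Rightarrow> nat set" where
  "covered_cells L h s d g1 g2 =
     (\<lambda>(t, u). h div d * t + u) ` ((\<Union>i\<in>{g1<..g2}. block_windows L h s i) \<times> {1..h div d})"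

definition near_boundary :: "nat \<Rightarrow> nat \<Rightarrow> nat \<Rightarrow> nat \<Rightarrow> nat set" where
  "near_boundary L N d c = {q. \<exists>i\<le>N. L * i \<le> d * q + c \<and> d * q \<le> L * i + c}"

lemma finite_block_windows:
  assumes "0 < h"
  shows "finite (block_windows L h s i)"
proof -
  have "t \<le> L * i" if "t \<in> block_windows L h s i" for t
  proof -
    have "t \<le> h * t" using assms by (cases h) auto
    moreover have "h * t + s \<le> L * i" using that by (simp add: block_windows_def)
    ultimately show ?thesis by linarith
  qed
  then show ?thesis by (meson finite_atMost finite_subset subsetI atMost_iff)
qed

lemma block_windows_disjoint:
  assumes "0 < s" "i \<noteq> i'"
  shows "block_windows L h s i \<inter> block_windows L h s i' = {}"
proof -
  have False if "i < i'" "t \<in> block_windows L h s i" "t \<in> block_windows L h s i'" for i i' t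
  proof -
    have "L * i \<le> L * (i' - 1)" using that(1) by (intro mult_le_mono2) linarith
    moreover have "L * (i' - 1) \<le> h * t" "h * t + s \<le> L * i"
      using that(2,3) by (simp_all add: block_windows_def)
    ultimately show False using \<open>0 < s\<close> by linarith
  qed
  then show ?thesis using \<open>i \<noteq> i'\<close> by (metis disjoint_iff nat_neq_iff)
qed

lemma finite_near_boundary:
  assumes "0 < d"
  shows "finite (near_boundary L N d c)"
proof -
  have "q \<le> L * N + c" if q: "q \<in> near_boundary L N d c" for q
  proof -
    obtain i where i: "i \<le> N" "d * q \<le> L * i + c"
      using q by (auto simp: near_boundary_def)
    have "q \<le> d * q" using assms by (cases d) auto
    moreover have "L * i \<le> L * N" using i(1) by simp
    ultimately show ?thesis using i(2) by linarith
  qed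
  then show ?thesis by (meson finite_atMost finite_subset subsetI atMost_iff)
qed

lemma card_near_boundary_le:
  assumes "0 < d"
  shows "card (near_boundary L N d c) \<le> (N + 1) * (2 * c + 1)"
proof -
  let ?A = "\<lambda>i. {q. L * i \<le> d * q + c \<and> d * q \<le> L * i + c}"
  have card_A: "card (?A i) \<le> 2 * c + 1" for i
  proof -
    have "inj_on (\<lambda>q. d * q) (?A i)" "(\<lambda>q. d * q) ` ?A i \<subseteq> {L * i - c..L * i + c}"
      using assms by (auto simp: inj_on_def)
    then have "card (?A i) \<le> card {L * i - c..L * i + c}"
      by (meson card_inj_on_le finite_atLeastAtMost)
    then show ?thesis by simp
  qed
  have "near_boundary L N d c = (\<Union>i\<le>N. ?A i)"
    unfolding near_boundary_def by blast
  then have "card (near_boundary L N d c) \<le> (\<Sum>i\<le>N. card (?A i))"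
    by (simp add: card_UN_le)
  also have "\<dots> \<le> (\<Sum>i\<le>N. 2 * c + 1)"
    using card_A by (rule sum_mono)
  finally show ?thesis by simp
qed

lemma covered_cellE:
  assumes "q \<in> covered_cells L h s d g1 g2" "0 < d" "d dvd h"
  obtains i where "g1 < i" "i \<le> g2" "L * (i - 1) < d * q" "d * q + s \<le> L * i + h"
proof -
  obtain h' where h: "h = d * h'" using \<open>d dvd h\<close> by blast
  with assms obtain t u i where "q = h' * t + u" "1 \<le> u" "u \<le> h'" "g1 < i" "i \<le> g2"
    "L * (i - 1) \<le> h * t" "h * t + s \<le> L * i"
    by (auto simp: covered_cells_def block_windows_def)
  moreover from this h have "d * q = h * t + d * u" "d \<le> d * u" "d * u \<le> h"
    by (auto simp: algebra_simps)
  ultimately show ?thesis using \<open>0 < d\<close> by (intro that[of i]) linarith+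
qed

lemma cell_in_covered_cells:
  assumes "0 < h" "0 < d" "d dvd h" "h \<le> c" "s \<le> c" "g1 < i" "i \<le> g2"
    and "L * (i - 1) + c < d * q" "d * q + c < L * i"
  shows "q \<in> covered_cells L h s d g1 g2"
proof -
  obtain h' where h: "h = d * h'" using \<open>d dvd h\<close> by blast
  with assms have "0 < h'" "h div d = h'" by auto
  have "0 < q" using assms(8) by (cases q) auto
  define t r where "t = (q - 1) div h'" and "r = (q - 1) mod h'"
  have q: "q = h' * t + (r + 1)" and "r < h'"
    using \<open>0 < q\<close> \<open>0 < h'\<close> by (simp_all add: t_def r_def)
  have "d * q = h * t + d * r + d"
    using q h by (simp add: algebra_simps)
  moreover have "d * (r + 1) \<le> d * h'"
    using \<open>r < h'\<close> by (intro mult_le_mono2) simp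
  then have "d * r + d \<le> h" using h by simp
  ultimately have "t \<in> block_windows L h s i"
    using assms(4,5,8,9) by (auto simp: block_windows_def)
  then show ?thesis
    using q \<open>r < h'\<close> \<open>h div d = h'\<close> assms(6,7)
    by (force simp: covered_cells_def intro!: image_eqI[of _ _ "(t, r + 1)"])
qed

lemma interval_diff_covered_cells_subset:
  assumes "0 < h" "0 < d" "d dvd h" "h \<le> c" "s \<le> c" "g1 \<le> g2" "g2 \<le> N"
    and "L * g1 \<le> d * a + c" "d * b \<le> L * g2 + c"
  shows "{a..b} - covered_cells L h s d g1 g2 \<subseteq> near_boundary L N d c"
proof
  fix q assume q: "q \<in> {a..b} - covered_cells L h s d g1 g2"
  show "q \<in> near_boundary L N d c"
  proof (rule ccontr)
    assume far: "q \<notin> near_boundary L N d c"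
    have far_i: "L * i + c < d * q \<or> d * q + c < L * i" if "i \<le> N" for i
    proof -
      have "\<not> (L * i \<le> d * q + c \<and> d * q \<le> L * i + c)"
        using far that unfolding near_boundary_def by blast
      then show ?thesis by linarith
    qed
    have "d * a \<le> d * q" "d * q \<le> d * b" using q by auto
    then have "L * g1 + c < d * q" "d * q + c < L * g2"
      using far_i[of g1] far_i[of g2] assms(6-9) by (meson le_trans add_le_mono1 not_le)+
    define i where "i = d * q div L + 1"
    have "0 < L" using \<open>L * g1 + c < d * q\<close> \<open>d * q + c < L * g2\<close> by (cases L) auto
    then have "L * (i - 1) \<le> d * q" "d * q < L * i"
      using dividend_less_div_times[of L "d * q"] by (auto simp: i_def algebra_simps)
    moreover have "g1 \<le> d * q div L"
      using \<open>0 < L\<close> \<open>L * g1 + c < d * q\<close> by (simp add: less_eq_div_iff_mult_less_eq mult.commute)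
    moreover have "d * q div L < g2"
      using \<open>0 < L\<close> \<open>d * q + c < L * g2\<close> by (simp add: div_less_iff_less_mult mult.commute)
    ultimately have "g1 < i" "i \<le> g2" "L * (i - 1) \<le> d * q" "d * q < L * i"
      by (simp_all add: i_def)
    moreover have "i - 1 \<le> N" "i \<le> N" using \<open>i \<le> g2\<close> assms(7) by auto
    ultimately have "L * (i - 1) + c < d * q" "d * q + c < L * i"
      using far_i[of "i - 1"] far_i[of i] by linarith+
    then have "q \<in> covered_cells L h s d g1 g2"
      using assms(1-5) \<open>g1 < i\<close> \<open>i \<le> g2\<close> by (intro cell_in_covered_cells)
    then show False using q by simp
  qed
qed

lemma covered_cells_diff_interval_subset:
  assumes "0 < d" "d dvd h" "h \<le> s" "g2 \<le> N"
    and "d * a \<le> L * g1 + c + d" "L * g2 \<le> d * (b + 1) + c"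
  shows "covered_cells L h s d g1 g2 - {a..b} \<subseteq> near_boundary L N d c"
proof
  fix q assume q: "q \<in> covered_cells L h s d g1 g2 - {a..b}"
  then obtain i where i: "g1 < i" "i \<le> g2" "L * (i - 1) < d * q" "d * q + s \<le> L * i + h"
    using assms(1,2) covered_cellE by blast
  from q consider "q < a" | "b < q" by force
  then show "q \<in> near_boundary L N d c"
  proof cases
    case 1
    then have "d * q + d \<le> d * a" by (metis Suc_leI mult_Suc_right mult_le_mono2 add.commute plus_1_eq_Suc)
    moreover have "L * g1 \<le> L * (i - 1)" using i(1) by (intro mult_le_mono2) linarith
    ultimately show ?thesis
      using i assms(4,5) unfolding near_boundary_def mem_Collect_eq
      by (intro exI[of _ g1] conjI) linarith+
  next
    case 2
    then have "d * (b + 1) \<le> d * q" by (intro mult_le_mono2) simp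
    moreover have "L * i \<le> L * g2" using i(2) by simp
    ultimately show ?thesis
      using i assms(3-6) unfolding near_boundary_def mem_Collect_eq
      by (intro exI[of _ g2] conjI) linarith+
  qed
qed

lemma sum_covered_cells:
  assumes "0 < h" "0 < s" "0 < d" "d dvd h"
  shows "(\<Sum>i\<in>{g1<..g2}. \<Sum>t\<in>block_windows L h s i. \<Sum>u=1..h div d. g (h div d * t + u))
    = (\<Sum>q\<in>covered_cells L h s d g1 g2. g q)"
proof -
  let ?T = "\<Union>i\<in>{g1<..g2}. block_windows L h s i" and ?h = "h div d"
  have "inj_on (\<lambda>(t, u). ?h * t + u) (?T \<times> {1..?h})"
  proof (rule inj_onI, clarify)
    fix t u t' u' assume "u \<in> {1..?h}" "u' \<in> {1..?h}" "?h * t + u = ?h * t' + u'"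
    then have "?h * t + (u - 1) = ?h * t' + (u' - 1)" "u - 1 < ?h" "u' - 1 < ?h" by auto
    moreover have "(?h * t + (u - 1)) div ?h = t" "(?h * t' + (u' - 1)) div ?h = t'"
      using \<open>u - 1 < ?h\<close> \<open>u' - 1 < ?h\<close> by simp_all
    ultimately have "t = t'" by metis
    then show "t = t' \<and> u = u'"
      using \<open>?h * t + u = ?h * t' + u'\<close> by simp
  qed
  have "(\<Sum>i\<in>{g1<..g2}. \<Sum>t\<in>block_windows L h s i. \<Sum>u=1..?h. g (?h * t + u))
      = (\<Sum>t\<in>?T. \<Sum>u=1..?h. g (?h * t + u))"
    using assms(1,2) finite_block_windows block_windows_disjoint
    by (intro sum.UNION_disjoint[symmetric]) auto
  also have "\<dots> = (\<Sum>(t, u)\<in>?T \<times> {1..?h}. g (?h * t + u))"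
    by (rule sum.cartesian_product)
  also have "\<dots> = (\<Sum>q\<in>covered_cells L h s d g1 g2. g q)"
    using \<open>inj_on _ _\<close> by (simp add: covered_cells_def sum.reindex case_prod_unfold)
  finally show ?thesis .
qed

lemma abs_sum_diff_le_card:
  fixes g :: "'a \<Rightarrow> real"
  assumes "finite P" "finite Q" "finite E" "P - Q \<subseteq> E" "Q - P \<subseteq> E"
    and "\<forall>q\<in>P \<union> Q. \<bar>g q\<bar> \<le> B" "0 \<le> B"
  shows "\<bar>sum g P - sum g Q\<bar> \<le> B * card E"
proof -
  have "\<bar>sum g P - sum g Q\<bar> = \<bar>sum g (P - Q) - sum g (Q - P)\<bar>"
    using sum.Int_Diff[OF assms(1), of g Q] sum.Int_Diff[OF assms(2), of g P]
    by (simp add: Int_commute)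
  also have "\<dots> \<le> (\<Sum>q\<in>P - Q. \<bar>g q\<bar>) + (\<Sum>q\<in>Q - P. \<bar>g q\<bar>)"
    by (intro order_trans[OF abs_triangle_ineq4 add_mono] sum_abs)
  also have "\<dots> = (\<Sum>q\<in>(P - Q) \<union> (Q - P). \<bar>g q\<bar>)"
    using assms(1,2) by (intro sum.union_disjoint[symmetric]) auto
  also have "\<dots> \<le> (\<Sum>q\<in>(P - Q) \<union> (Q - P). B)"
    using assms(6) by (intro sum_mono) auto
  also have "\<dots> = B * card ((P - Q) \<union> (Q - P))"
    by simp
  also have "\<dots> \<le> B * card E"
    using assms(3-5,7) by (intro mult_left_mono) (simp_all add: card_mono)
  finally show ?thesis .
qed

lemma finite_covered_cells: "0 < h \<Longrightarrow> finite (covered_cells L h s d g1 g2)"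
  by (simp add: covered_cells_def finite_block_windows)

lemma sum_block_windows_approx:
  fixes g :: "nat \<Rightarrow> real"
  assumes "0 < h" "0 < d" "d dvd h" "h \<le> s" "s \<le> c" "g1 \<le> g2" "g2 \<le> N"
    and "L * g1 \<le> d * a + c" "d * a \<le> L * g1 + c + d"
    and "d * b \<le> L * g2 + c" "L * g2 \<le> d * (b + 1) + c"
    and "\<forall>q\<in>{a..b} \<union> covered_cells L h s d g1 g2. \<bar>g q\<bar> \<le> B" "0 \<le> B"
  shows "\<bar>(\<Sum>q=a..b. g q)
      - (\<Sum>i\<in>{g1<..g2}. \<Sum>t\<in>block_windows L h s i. \<Sum>u=1..h div d. g (h div d * t + u))\<bar>
    \<le> B * ((N + 1) * (2 * c + 1))"
proof -
  have eq: "(\<Sum>i\<in>{g1<..g2}. \<Sum>t\<in>block_windows L h s i. \<Sum>u=1..h div d. g (h div d * t + u))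
      = (\<Sum>q\<in>covered_cells L h s d g1 g2. g q)"
    using assms(1-4) by (intro sum_covered_cells) auto
  have "\<bar>sum g {a..b} - sum g (covered_cells L h s d g1 g2)\<bar> \<le> B * card (near_boundary L N d c)"
  proof (rule abs_sum_diff_le_card)
    show "{a..b} - covered_cells L h s d g1 g2 \<subseteq> near_boundary L N d c"
      using assms(1-10) by (intro interval_diff_covered_cells_subset) auto
    show "covered_cells L h s d g1 g2 - {a..b} \<subseteq> near_boundary L N d c"
      using assms(2-4,7,9,11) by (intro covered_cells_diff_interval_subset)
  qed (use assms(1,2,12,13) finite_covered_cells finite_near_boundary in auto)
  also have "\<dots> \<le> B * ((N + 1) * (2 * c + 1))"
    using card_near_boundary_le[OF \<open>0 < d\<close>] \<open>0 \<le> B\<close> by (intro mult_left_mono) (simp_all only: of_nat_le_iff)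
  finally show ?thesis
    unfolding eq .
qed

lemma group_boundary_bounds:
  fixes n N G j :: nat
  assumes "0 < N" "G dvd N" "j \<le> G"
  shows "n div N * (N div G * j) \<le> n div G * j"
    and "n div G * j \<le> n div N * (N div G * j) + N"
proof -
  define L b where "L = n div N" and "b = N div G"
  have "0 < G" using assms(1,2) by (cases G) auto
  have N: "N = b * G" using \<open>G dvd N\<close> by (simp add: b_def)
  have n: "L * N \<le> n" "n < L * N + N"
    using dividend_less_div_times[OF \<open>0 < N\<close>, of n] by (simp_all add: L_def mult.commute)
  have "L * b \<le> n div G"
    using n(1) \<open>0 < G\<close> by (simp add: less_eq_div_iff_mult_less_eq N mult.assoc)
  then show "L * (b * j) \<le> n div G * j"
    using mult_le_mono1 by (simp add: mult.assoc)
  have "n div G < (L + 1) * b"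
    using n(2) \<open>0 < G\<close> by (simp add: div_less_iff_less_mult N algebra_simps)
  then have "n div G * j \<le> (L * b + b) * j"
    by (intro mult_le_mono1) simp
  moreover have "b * j \<le> b * G"
    using assms(3) by simp
  moreover have "(L * b + b) * j = L * (b * j) + b * j"
    by (simp add: algebra_simps)
  ultimately show "n div G * j \<le> L * (b * j) + N"
    unfolding N by linarith
qed

lemma grouped_window_sum_approx:
  fixes g :: "nat \<Rightarrow> real"
  assumes "0 < h" "0 < m" "h + m \<le> s + 1" "0 < N" "G dvd N" "k \<in> {1..G}" "m \<le> n div G"
    and bound: "\<And>p. 1 \<le> p \<Longrightarrow> p + m \<le> n + 1 \<Longrightarrow> \<bar>g p\<bar> \<le> B"
  shows "\<bar>(\<Sum>p = n div G * (k - 1) + 1..n div G * k + 1 - m. g p)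
      - (\<Sum>i\<in>{N div G * (k - 1)<..N div G * k}. \<Sum>t\<in>block_windows (n div N) h s i. \<Sum>u=1..h. g (h * t + u))\<bar>
    \<le> B * ((N + 1) * (2 * (N + s + 1) + 1))"
proof -
  define L G' b where "L = n div N" and "G' = n div G" and "b = N div G"
  have N: "N = b * G" using \<open>G dvd N\<close> by (simp add: b_def)
  have n: "L * N \<le> n" "n < L * N + N"
    using dividend_less_div_times[OF \<open>0 < N\<close>, of n] by (simp_all add: L_def mult.commute)
  have blocks: "L * (b * j) \<le> G' * j" "G' * j \<le> L * (b * j) + N" if "j \<le> k" for j
  proof -
    have "j \<le> G" using that assms(6) by simp
    from group_boundary_bounds[OF assms(4,5) this]
    show "L * (b * j) \<le> G' * j" "G' * j \<le> L * (b * j) + N"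
      unfolding L_def G'_def b_def by simp_all
  qed
  have "b * k \<le> N"
    using assms(6) N by simp
  have "G' * (k - 1) + G' = G' * k"
    using assms(6) by (cases k) auto
  then have "m \<le> G' * k"
    using assms(6,7) G'_def by (metis le_trans mult_le_mono2 mult_1_right atLeastAtMost_iff)
  have "G' * k \<le> G' * G" using assms(6) by simp
  also have "\<dots> \<le> n" by (simp add: G'_def)
  finally have "G' * k \<le> n" .
  have "\<bar>(\<Sum>p = G' * (k - 1) + 1..G' * k + 1 - m. g p)
      - (\<Sum>i\<in>{b * (k - 1)<..b * k}. \<Sum>t\<in>block_windows L h s i. \<Sum>u=1..h div 1. g (h div 1 * t + u))\<bar>
    \<le> B * ((N + 1) * (2 * (N + s + 1) + 1))"
  proof (rule sum_block_windows_approx)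
    show "\<forall>q\<in>{G' * (k - 1) + 1..G' * k + 1 - m} \<union> covered_cells L h s 1 (b * (k - 1)) (b * k).
        \<bar>g q\<bar> \<le> B"
    proof
      fix q assume "q \<in> {G' * (k - 1) + 1..G' * k + 1 - m} \<union> covered_cells L h s 1 (b * (k - 1)) (b * k)"
      then have "1 \<le> q \<and> q + m \<le> n + 1"
      proof
        assume "q \<in> covered_cells L h s 1 (b * (k - 1)) (b * k)"
        then obtain i where "i \<le> b * k" "L * (i - 1) < q" "q + s \<le> L * i + h"
          by (auto elim: covered_cellE)
        moreover have "L * i \<le> L * N" using \<open>i \<le> b * k\<close> \<open>b * k \<le> N\<close> by simp
        ultimately show ?thesis using n assms(3) by linarith
      next
        assume "q \<in> {G' * (k - 1) + 1..G' * k + 1 - m}"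
        then show ?thesis using \<open>G' * k \<le> n\<close> \<open>m \<le> G' * k\<close> by auto
      qed
      then show "\<bar>g q\<bar> \<le> B" using bound by blast
    qed
    have "m \<le> n"
      using assms(7) div_le_dividend[of n G] by linarith
    then show "0 \<le> B"
      using bound[of 1] by force
    show "L * (b * (k - 1)) \<le> 1 * (G' * (k - 1) + 1) + (N + s + 1)"
      using blocks(1)[OF diff_le_self[of k 1]] unfolding mult.left_neutral by linarith
    show "1 * (G' * (k - 1) + 1) \<le> L * (b * (k - 1)) + (N + s + 1) + 1"
      using blocks(2)[OF diff_le_self[of k 1]] unfolding mult.left_neutral by linarith
    show "1 * (G' * k + 1 - m) \<le> L * (b * k) + (N + s + 1)"
      using blocks(2)[OF order_refl] unfolding mult.left_neutral by linarith
    show "L * (b * k) \<le> 1 * (G' * k + 1 - m + 1) + (N + s + 1)"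
      using blocks(1)[OF order_refl] assms(3) \<open>m \<le> G' * k\<close> unfolding mult.left_neutral by linarith
  qed (use assms(1-3) \<open>b * k \<le> N\<close> in auto)
  then show ?thesis by (simp add: L_def G'_def b_def)
qed

lemma cell_window_sum_approx:
  fixes g :: "nat \<Rightarrow> real"
  assumes "0 < h" "h \<le> s" "0 < N" "0 < d" "d dvd h" and bound: "\<And>q. \<bar>g q\<bar> \<le> B"
  shows "\<bar>(\<Sum>q=1..n div d. g q)
      - (\<Sum>i\<in>{1..N}. \<Sum>t\<in>block_windows (n div N) h s i. \<Sum>u=1..h div d. g (h div d * t + u))\<bar>
    \<le> B * ((N + 1) * (2 * (N + s + 1) + 1))"
proof -
  have n: "n div N * N \<le> n" "n < n div N * N + N" "d * (n div d) \<le> n" "n < d * (n div d) + d"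
    using dividend_less_div_times[OF \<open>0 < N\<close>, of n] dividend_less_div_times[OF \<open>0 < d\<close>, of n]
    by (simp_all add: mult.commute)
  have "\<bar>(\<Sum>q=1..n div d. g q)
      - (\<Sum>i\<in>{0<..N}. \<Sum>t\<in>block_windows (n div N) h s i. \<Sum>u=1..h div d. g (h div d * t + u))\<bar>
    \<le> B * ((N + 1) * (2 * (N + s + 1) + 1))"
  proof (rule sum_block_windows_approx)
    show "d * (n div d) \<le> n div N * N + (N + s + 1)"
      using n by linarith
    have "d * (n div d + 1) = d * (n div d) + d" by simp
    then show "n div N * N \<le> d * (n div d + 1) + (N + s + 1)"
      using n(1,4) by linarith
    show "0 \<le> B" using bound[of 0] by linarith
  qed (use assms in auto)
  moreover have "{0<..N} = {1..N}" by auto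
  ultimately show ?thesis by simp
qed

lemma win_shift: "win (\<lambda>k. e (a + k)) u m = win e (a + u) m"
  by (simp add: win_def add.assoc)

lemma measurable_win_H0:
  assumes "sets P = sets X"
  shows "(\<lambda>w. win w u m) \<in> measurable (H0 P) (PiM {..<m} (\<lambda>_. X))"
  unfolding win_def
proof (rule measurable_restrict)
  fix k assume "k \<in> {..<m}"
  have "(\<lambda>w. w (u + k)) \<in> measurable (H0 P) P"
    unfolding H0_def by (rule measurable_component_singleton) simp
  then show "(\<lambda>w. w (u + k)) \<in> measurable (H0 P) X"
    using measurable_cong_sets[of "H0 P" "H0 P" P X] assms by simp
qed

lemma win_in_space_H0:
  assumes "sets P = sets X" "w \<in> space (H0 P)"
  shows "win w u m \<in> space (PiM {..<m} (\<lambda>_. X))"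
  using assms sets_eq_imp_space_eq[OF assms(1)]
  by (auto simp: H0_def win_def space_PiM PiE_def)

lemma EH0_win:
  fixes g :: "(nat \<Rightarrow> 'a) \<Rightarrow> real"
  assumes P: "prob_space P" and S: "sets P = sets X"
    and g: "g \<in> borel_measurable (PiM {..<m} (\<lambda>_. X))"
  shows "EH0 P (\<lambda>w. g (win w u m)) = integral\<^sup>L (PiM {..<m} (\<lambda>_. P)) g"
proof -
  have "sets (PiM {..<m} (\<lambda>_. X)) = sets (PiM {..<m} (\<lambda>_. P))"
    using S by (intro sets_PiM_cong) auto
  then have g': "g \<in> borel_measurable (PiM {..<m} (\<lambda>_. P))"
    using g measurable_cong_sets by blast
  have "distr (H0 P) (PiM {..<m} (\<lambda>_. P)) (\<lambda>w. win w u m) = PiM {..<m} (\<lambda>_. P)"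
    using distr_PiM_reindex[of UNIV "\<lambda>_. P" "\<lambda>n. u + n" "{..<m}"] P
    by (simp add: inj_on_def H0_def win_def)
  then show ?thesis
    unfolding EH0_def using integral_distr[OF measurable_win_H0[of P P u m] g'] by simp
qed

lemma integrable_win_H0:
  fixes g :: "(nat \<Rightarrow> 'a) \<Rightarrow> real"
  assumes "prob_space P" "sets P = sets X"
    and g: "g \<in> borel_measurable (PiM {..<m} (\<lambda>_. X))"
    and B: "\<forall>\<theta>\<in>space (PiM {..<m} (\<lambda>_. X)). \<bar>g \<theta>\<bar> \<le> B"
  shows "integrable (H0 P) (\<lambda>w. g (win w u m))"
proof -
  interpret prob_space "H0 P"
    unfolding H0_def using assms(1) by (intro prob_space_PiM) auto
  show ?thesis
  proof (rule integrable_const_bound[of _ B])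
    show "AE w in H0 P. norm (g (win w u m)) \<le> B"
      using B win_in_space_H0[OF assms(2)] by (intro AE_I2) auto
    show "(\<lambda>w. g (win w u m)) \<in> borel_measurable (H0 P)"
      using measurable_comp[OF measurable_win_H0[OF assms(2)] g] by (simp add: comp_def)
  qed
qed

lemma EH0_sum_win:
  fixes g :: "(nat \<Rightarrow> 'a) \<Rightarrow> real"
  assumes P: "prob_space P" and S: "sets P = sets X"
    and g: "g \<in> borel_measurable (PiM {..<m} (\<lambda>_. X))"
    and B: "\<forall>\<theta>\<in>space (PiM {..<m} (\<lambda>_. X)). \<bar>g \<theta>\<bar> \<le> B"
  shows "EH0 P (\<lambda>w. (\<Sum>u\<in>U. g (win w (a u) m)) / c) = real (card U) * EH0 P (\<lambda>w. g (win w 1 m)) / c"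
proof (cases "finite U")
  case True
  have "EH0 P (\<lambda>w. (\<Sum>u\<in>U. g (win w (a u) m)) / c) = (\<Sum>u\<in>U. EH0 P (\<lambda>w. g (win w (a u) m))) / c"
    unfolding EH0_def using integrable_win_H0[OF P S g B] by (simp add: True)
  also have "\<dots> = real (card U) * EH0 P (\<lambda>w. g (win w 1 m)) / c"
    using EH0_win[OF P S g] by simp
  finally show ?thesis .
qed (simp add: EH0_def)

definition window_dev :: "'a measure \<Rightarrow> ((nat \<Rightarrow> 'a) \<Rightarrow> real) \<Rightarrow> nat \<Rightarrow> (nat \<Rightarrow> 'a) \<Rightarrow> nat \<Rightarrow> real" where
  "window_dev P f m e p = f (win e p m) - Emean P f m"

definition cell_dev :: "'a cfg \<Rightarrow> nat \<Rightarrow> (nat \<Rightarrow> 'a) \<Rightarrow> nat \<Rightarrow> real" where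
  "cell_dev C j e q =
     (if fsb C (win e (Lsb C * (q - 1) + 1) (Lsb C)) \<in> alpha C j then 1 else 0) - Esb C j"

lemma Tsum_eq_window_dev:
  "Tsum C n e = (\<Sum>p=1..n + 1 - msum C. window_dev (P0 C) (fsum C) (msum C) e p)
     / (sigma (P0 C) (fsum C) (msum C) * sqrt (real (n + 1 - msum C)))"
  by (simp add: Tsum_def window_dev_def)

lemma Wlb_eq_window_dev:
  assumes "1 \<le> k" "mlb C \<le> n div Nlb C"
  shows "Wlb C n e k - (real (n div Nlb C) - real (mlb C) + 1) * Emean (P0 C) (flb C) (mlb C)
    = (\<Sum>p = n div Nlb C * (k - 1) + 1..n div Nlb C * k + 1 - mlb C. window_dev (P0 C) (flb C) (mlb C) e p)"
proof -
  let ?L = "n div Nlb C"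
  have "?L * k = ?L * (k - 1) + ?L" using assms(1) by (cases k) auto
  then have "real (card {?L * (k - 1) + 1..?L * k + 1 - mlb C}) = real ?L - real (mlb C) + 1"
    using assms(2) by (simp add: of_nat_diff)
  then show ?thesis
    by (simp add: Wlb_def Let_def window_dev_def sum_subtractf)
qed

lemma wsb_eq_cell_dev:
  "real (wsb C n e j) - real (n div Lsb C) * Esb C j = (\<Sum>q=1..n div Lsb C. cell_dev C j e q)"
proof -
  let ?P = "\<lambda>i. fsb C (win e (Lsb C * (i - 1) + 1) (Lsb C)) \<in> alpha C j"
  have "real (wsb C n e j) = (\<Sum>i\<in>{i\<in>{1..n div Lsb C}. ?P i}. 1)" by (simp add: wsb_def)
  also have "\<dots> = (\<Sum>i=1..n div Lsb C. if ?P i then 1 else 0)" by (rule sum.inter_filter) simp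
  finally show ?thesis by (simp add: cell_dev_def sum_subtractf)
qed

lemma Tlb_ge_summand:
  assumes "k \<in> {1..Nlb C}"
  shows "(Wlb C n e k - (real (n div Nlb C) - real (mlb C) + 1) * Emean (P0 C) (flb C) (mlb C))\<^sup>2
      / (real (n div Nlb C) * (sigma (P0 C) (flb C) (mlb C))\<^sup>2) \<le> Tlb C n e"
  unfolding Tlb_def Let_def by (rule member_le_sum) (use assms in auto)

lemma Tsb_ge_summand:
  assumes "j \<le> Ksb C"
  shows "(real (wsb C n e j) - real (n div Lsb C) * Esb C j)\<^sup>2 / (real (n div Lsb C) * Esb C j)
    \<le> Tsb C n e"
  unfolding Tsb_def Let_def by (rule member_le_sum) (use assms in \<open>auto simp: Esb_def\<close>)

lemma EH0_cell_indicator: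
  "EH0 (P0 C) (\<lambda>w. if fsb C (win w 1 (Lsb C)) \<in> alpha C j then 1 else 0) = Esb C j"
proof -
  have "(\<lambda>w. if fsb C (win w 1 (Lsb C)) \<in> alpha C j then 1 else 0 :: real)
      = indicator {w. fsb C (win w 1 (Lsb C)) \<in> alpha C j}"
    by (simp add: fun_eq_iff indicator_def)
  moreover have "{w. fsb C (win w 1 (Lsb C)) \<in> alpha C j} \<inter> space (H0 (P0 C))
      = {w \<in> space (H0 (P0 C)). fsb C (win w 1 (Lsb C)) \<in> alpha C j}"
    by auto
  ultimately show ?thesis unfolding EH0_def Esb_def by simp
qed

lemma mult_sum_centered_window_sums:
  fixes f :: "(nat \<Rightarrow> 'a) \<Rightarrow> real"
  assumes "c \<noteq> 0" "\<And>\<theta>. F \<theta> = (\<Sum>u\<in>U. f (win \<theta> (a u) m)) / c"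
    and "EH0 P F = real (card U) * E / c"
  shows "c * (\<Sum>t\<in>T. F (\<lambda>k. e (h * t + k)) - EH0 P F) = (\<Sum>t\<in>T. \<Sum>u\<in>U. f (win e (h * t + a u) m) - E)"
proof -
  have "c * (F (\<lambda>k. e (h * t + k)) - EH0 P F) = (\<Sum>u\<in>U. f (win e (h * t + a u) m) - E)" for t
    using assms by (simp add: win_shift right_diff_distrib sum_subtractf)
  then show ?thesis by (simp add: sum_distrib_left)
qed

locale window_statistics =
  fixes C :: "'a cfg" and N s h :: nat and M :: "nat \<Rightarrow> 'b measure"
    and eps :: "nat \<Rightarrow> 'b \<Rightarrow> nat \<Rightarrow> 'a" and XM :: "'a measure" and x :: "nat \<Rightarrow> nat \<Rightarrow> real"
  assumes P0: "prob_space (P0 C)" "sets (P0 C) = sets XM"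
    and pos: "0 < msum C" "0 < mlb C" "0 < Nlb C" "0 < Lsb C" "0 < N" "0 < h"
    and meas_sum: "fsum C \<in> borel_measurable (PiM {..<msum C} (\<lambda>_. XM))"
    and meas_lb: "flb C \<in> borel_measurable (PiM {..<mlb C} (\<lambda>_. XM))"
    and meas_sb: "fsb C \<in> borel_measurable (PiM {..<Lsb C} (\<lambda>_. XM))"
    and bdd_sum: "\<exists>B. \<forall>\<theta>\<in>space (PiM {..<msum C} (\<lambda>_. XM)). \<bar>fsum C \<theta>\<bar> \<le> B"
    and bdd_lb: "\<exists>B. \<forall>\<theta>\<in>space (PiM {..<mlb C} (\<lambda>_. XM)). \<bar>flb C \<theta>\<bar> \<le> B"
    and alpha_sets: "\<forall>j\<le>Ksb C. alpha C j \<in> sets borel"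
    and sig: "0 < sigma (P0 C) (fsum C) (msum C)" "0 < sigma (P0 C) (flb C) (mlb C)"
    and Esb_pos: "\<forall>j\<le>Ksb C. 0 < Esb C j"
    and s_ge: "h + max (msum C) (mlb C) - 1 \<le> s"
    and dvd: "Nlb C dvd N" "Lsb C dvd h"
    and scheme: "\<forall>n. prob_space (M n)" "\<forall>n. \<forall>i\<in>{1..n}. (\<lambda>w. eps n w i) \<in> measurable (M n) XM"
    and conv: "\<forall>i\<in>{1..N}. \<forall>j\<le>Ksb C + 2.
      cvg_prob M (\<lambda>n w. Xcal C N s h n i j (eps n w) / sqrt (real n)) (x i j)"
begin

definition scaled_Xcal :: "nat \<Rightarrow> nat \<Rightarrow> nat \<Rightarrow> 'b \<Rightarrow> real" where
  "scaled_Xcal i j n w = Xcal C N s h n i j (eps n w) / sqrt (real n)"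

definition block_sum :: "nat \<Rightarrow> nat \<Rightarrow> nat \<Rightarrow> (nat \<Rightarrow> 'a) \<Rightarrow> real" where
  "block_sum n i j e =
     (\<Sum>t\<in>block_windows (n div N) h s i. fs C h j (\<lambda>k. e (h * t + k)) - EH0 (P0 C) (fs C h j))"

lemma window_lengths: "h + msum C \<le> s + 1" "h + mlb C \<le> s + 1" "h \<le> s"
  using s_ge pos by auto

lemma prob_space_M: "prob_space (M n)"
  using scheme(1) by blast

lemma scaled_Xcal_eq: "scaled_Xcal i j n w = block_sum n i j (eps n w) / real n"
  unfolding scaled_Xcal_def Xcal_def block_sum_def block_windows_def Let_def
  by (simp add: divide_divide_eq_left real_sqrt_mult_self)

lemma mult_sum_scaled_Xcal:
  "0 < n \<Longrightarrow> \<kappa> * real n * (\<Sum>i\<in>I. scaled_Xcal i j n w) = (\<Sum>i\<in>I. \<kappa> * block_sum n i j (eps n w))"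
  by (simp add: scaled_Xcal_eq sum_distrib_left)

lemma block_windows_le:
  assumes "t \<in> block_windows (n div N) h s i" "i \<le> N"
  shows "h * t + s \<le> n"
proof -
  have "h * t + s \<le> n div N * i"
    using assms(1) by (simp add: block_windows_def)
  also have "\<dots> \<le> n div N * N"
    using assms(2) by simp
  also have "\<dots> \<le> n"
    by simp
  finally show ?thesis .
qed

lemma measurable_window:
  assumes "f \<in> borel_measurable (PiM {..<m} (\<lambda>_. XM))" "1 \<le> p" "p + m \<le> n + 1"
  shows "(\<lambda>w. f (win (eps n w) p m)) \<in> borel_measurable (M n)"
proof -
  have "(\<lambda>w. win (eps n w) p m) \<in> measurable (M n) (PiM {..<m} (\<lambda>_. XM))"
    unfolding win_def
  proof (rule measurable_restrict)
    fix k assume "k \<in> {..<m}"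
    then show "(\<lambda>w. eps n w (p + k)) \<in> measurable (M n) XM"
      using scheme(2) assms(2,3) by auto
  qed
  from measurable_comp[OF this assms(1)] show ?thesis by (simp add: comp_def)
qed

lemma window_in_space:
  assumes "w \<in> space (M n)" "1 \<le> p" "p + m \<le> n + 1"
  shows "win (eps n w) p m \<in> space (PiM {..<m} (\<lambda>_. XM))"
proof -
  have "eps n w (p + k) \<in> space XM" if "k < m" for k
    using measurable_space[of "\<lambda>w. eps n w (p + k)" "M n" XM w] scheme(2) that assms by auto
  then show ?thesis by (simp add: win_def space_PiM)
qed

lemma abs_window_dev_le:
  assumes "\<forall>\<theta>\<in>space (PiM {..<m} (\<lambda>_. XM)). \<bar>f \<theta>\<bar> \<le> B"
    and "w \<in> space (M n)" "1 \<le> p" "p + m \<le> n + 1"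
  shows "\<bar>window_dev (P0 C) f m (eps n w) p\<bar> \<le> B + \<bar>Emean (P0 C) f m\<bar>"
proof -
  have "\<bar>f (win (eps n w) p m)\<bar> \<le> B"
    using assms window_in_space by blast
  then show ?thesis
    using abs_triangle_ineq4[of "f (win (eps n w) p m)" "Emean (P0 C) f m"]
    unfolding window_dev_def by linarith
qed

lemma EH0_window_sum:
  assumes "f \<in> borel_measurable (PiM {..<m} (\<lambda>_. XM))"
    and "\<exists>B. \<forall>\<theta>\<in>space (PiM {..<m} (\<lambda>_. XM)). \<bar>f \<theta>\<bar> \<le> B"
  shows "EH0 (P0 C) (\<lambda>\<theta>. (\<Sum>u=1..h. f (win \<theta> u m)) / c) = real h * Emean (P0 C) f m / c"
proof -
  obtain B where "\<forall>\<theta>\<in>space (PiM {..<m} (\<lambda>_. XM)). \<bar>f \<theta>\<bar> \<le> B"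
    using assms(2) by blast
  from EH0_sum_win[OF P0 assms(1) this, where U = "{1..h}" and a = id] show ?thesis
    by (simp add: Emean_def)
qed

lemma sigma_mult_block_sum_fsum:
  "sigma (P0 C) (fsum C) (msum C) * block_sum n i (Ksb C + 2) e
    = (\<Sum>t\<in>block_windows (n div N) h s i. \<Sum>u=1..h. window_dev (P0 C) (fsum C) (msum C) e (h * t + u))"
  unfolding block_sum_def window_dev_def
  by (rule mult_sum_centered_window_sums)
    (use sig EH0_window_sum[OF meas_sum bdd_sum] in \<open>simp_all add: fs_def\<close>)

lemma sigma_mult_block_sum_flb:
  "sigma (P0 C) (flb C) (mlb C) * block_sum n i (Ksb C + 1) e
    = (\<Sum>t\<in>block_windows (n div N) h s i. \<Sum>u=1..h. window_dev (P0 C) (flb C) (mlb C) e (h * t + u))"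
  unfolding block_sum_def window_dev_def
  by (rule mult_sum_centered_window_sums)
    (use sig EH0_window_sum[OF meas_lb bdd_lb] in \<open>simp_all add: fs_def\<close>)

lemma sqrt_Esb_mult_block_sum:
  assumes "j \<le> Ksb C"
  shows "sqrt (Esb C j) * block_sum n i j e
    = (\<Sum>t\<in>block_windows (n div N) h s i. \<Sum>u=1..h div Lsb C. cell_dev C j e (h div Lsb C * t + u))"
proof -
  let ?g = "\<lambda>\<theta>. if fsb C \<theta> \<in> alpha C j then 1 else (0::real)"
  have "0 < Esb C j" using Esb_pos assms by blast
  have "alpha C j \<in> sets borel" using alpha_sets assms by blast
  then have g: "?g \<in> borel_measurable (PiM {..<Lsb C} (\<lambda>_. XM))"
    using meas_sb by measurable
  have g_bound: "\<forall>\<theta>\<in>space (PiM {..<Lsb C} (\<lambda>_. XM)). \<bar>?g \<theta>\<bar> \<le> 1"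
    by simp
  have fs: "fs C h j = (\<lambda>\<theta>. (\<Sum>u\<in>{1..h div Lsb C}. ?g (win \<theta> (Lsb C * (u - 1) + 1) (Lsb C)))
      / sqrt (Esb C j))"
    using assms by (simp add: fs_def fun_eq_iff)
  have "EH0 (P0 C) (fs C h j) = real (card {1..h div Lsb C}) * Esb C j / sqrt (Esb C j)"
    unfolding fs EH0_cell_indicator[symmetric]
    by (rule EH0_sum_win[OF P0 g g_bound, where U = "{1..h div Lsb C}" and a = "\<lambda>u. Lsb C * (u - 1) + 1"])
  then have "sqrt (Esb C j) * block_sum n i j e
    = (\<Sum>t\<in>block_windows (n div N) h s i. \<Sum>u=1..h div Lsb C.
        ?g (win e (h * t + (Lsb C * (u - 1) + 1)) (Lsb C)) - Esb C j)"
    unfolding block_sum_def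
    by (intro mult_sum_centered_window_sums) (use \<open>0 < Esb C j\<close> fs in simp_all)
  also have "\<dots> = (\<Sum>t\<in>block_windows (n div N) h s i. \<Sum>u=1..h div Lsb C. cell_dev C j e (h div Lsb C * t + u))"
  proof (intro sum.cong refl)
    fix t u assume "u \<in> {1..h div Lsb C}"
    moreover obtain h' where "h = Lsb C * h'" using dvd(2) ..
    ultimately have "h * t + (Lsb C * (u - 1) + 1) = Lsb C * (h div Lsb C * t + u - 1) + 1"
      using pos(4) by (cases u) (auto simp: algebra_simps)
    then show "?g (win e (h * t + (Lsb C * (u - 1) + 1)) (Lsb C)) - Esb C j
        = cell_dev C j e (h div Lsb C * t + u)"
      by (simp add: cell_dev_def)
  qed
  finally show ?thesis .
qed

lemma measurable_window_dev:
  assumes "f \<in> borel_measurable (PiM {..<m} (\<lambda>_. XM))" "1 \<le> p" "p + m \<le> n + 1"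
  shows "(\<lambda>w. window_dev (P0 C) f m (eps n w) p) \<in> borel_measurable (M n)"
  unfolding window_dev_def using measurable_window[OF assms] by simp

lemma measurable_cell_dev:
  assumes "j \<le> Ksb C" "1 \<le> q" "Lsb C * q \<le> n"
  shows "(\<lambda>w. cell_dev C j (eps n w) q) \<in> borel_measurable (M n)"
proof -
  have "Lsb C * q = Lsb C * (q - 1) + Lsb C"
    using assms(2) by (cases q) auto
  then have "(\<lambda>w. fsb C (win (eps n w) (Lsb C * (q - 1) + 1) (Lsb C))) \<in> borel_measurable (M n)"
    using assms(3) by (intro measurable_window meas_sb) auto
  moreover have "alpha C j \<in> sets borel" using alpha_sets assms(1) by blast
  ultimately show ?thesis
    unfolding cell_dev_def by measurable
qed

lemma window_in_block:
  assumes "t \<in> block_windows (n div N) h s i" "i \<le> N" "u \<le> h" "h + m \<le> s + 1"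
  shows "h * t + u + m \<le> n + 1"
  using block_windows_le[OF assms(1,2)] assms(3,4) by linarith

lemma cell_in_block:
  assumes "t \<in> block_windows (n div N) h s i" "i \<le> N" "u \<le> h div Lsb C"
  shows "Lsb C * (h div Lsb C * t + u) \<le> n"
proof -
  obtain h' where h: "h = Lsb C * h'" using dvd(2) ..
  then have "Lsb C * u \<le> h" using assms(3) pos(4) by simp
  moreover have "Lsb C * (h div Lsb C * t + u) = h * t + Lsb C * u"
    using h pos(4) by (simp add: algebra_simps)
  ultimately show ?thesis
    using block_windows_le[OF assms(1,2)] window_lengths(3) by linarith
qed

lemma measurable_block_sum:
  assumes "i \<le> N" "j \<le> Ksb C + 2"
  shows "(\<lambda>w. block_sum n i j (eps n w)) \<in> borel_measurable (M n)"
proof -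
  consider "j \<le> Ksb C" | "j = Ksb C + 1" | "j = Ksb C + 2" using assms(2) by linarith
  then show ?thesis
  proof cases
    case 1
    then have "block_sum n i j (eps n w) = (\<Sum>t\<in>block_windows (n div N) h s i.
        \<Sum>u=1..h div Lsb C. cell_dev C j (eps n w) (h div Lsb C * t + u)) / sqrt (Esb C j)" for w
      using sqrt_Esb_mult_block_sum[of j n i "eps n w"] Esb_pos
      by (simp add: field_simps less_imp_neq[symmetric])
    moreover have "(\<lambda>w. cell_dev C j (eps n w) (h div Lsb C * t + u)) \<in> borel_measurable (M n)"
      if "t \<in> block_windows (n div N) h s i" "u \<in> {1..h div Lsb C}" for t u
      using that 1 assms(1) by (intro measurable_cell_dev cell_in_block) auto
    ultimately show ?thesis by simp
  next
    case 2
    then have "block_sum n i j (eps n w) = (\<Sum>t\<in>block_windows (n div N) h s i.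
        \<Sum>u=1..h. window_dev (P0 C) (flb C) (mlb C) (eps n w) (h * t + u)) / sigma (P0 C) (flb C) (mlb C)" for w
      using sigma_mult_block_sum_flb[of n i "eps n w"] sig by (simp add: field_simps)
    moreover have "(\<lambda>w. window_dev (P0 C) (flb C) (mlb C) (eps n w) (h * t + u)) \<in> borel_measurable (M n)"
      if "t \<in> block_windows (n div N) h s i" "u \<in> {1..h}" for t u
      using that assms(1) window_lengths(2) by (intro measurable_window_dev meas_lb window_in_block) auto
    ultimately show ?thesis by simp
  next
    case 3
    then have "block_sum n i j (eps n w) = (\<Sum>t\<in>block_windows (n div N) h s i.
        \<Sum>u=1..h. window_dev (P0 C) (fsum C) (msum C) (eps n w) (h * t + u)) / sigma (P0 C) (fsum C) (msum C)" for w
      using sigma_mult_block_sum_fsum[of n i "eps n w"] sig by (simp add: field_simps)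
    moreover have "(\<lambda>w. window_dev (P0 C) (fsum C) (msum C) (eps n w) (h * t + u)) \<in> borel_measurable (M n)"
      if "t \<in> block_windows (n div N) h s i" "u \<in> {1..h}" for t u
      using that assms(1) window_lengths(1) by (intro measurable_window_dev meas_sum window_in_block) auto
    ultimately show ?thesis by simp
  qed
qed

lemma measurable_sum_scaled_Xcal:
  "I \<subseteq> {1..N} \<Longrightarrow> j \<le> Ksb C + 2 \<Longrightarrow> (\<lambda>w. \<Sum>i\<in>I. scaled_Xcal i j n w) \<in> borel_measurable (M n)"
  unfolding scaled_Xcal_eq by (intro borel_measurable_sum borel_measurable_divide measurable_block_sum) auto

lemma cvg_prob_sum_scaled_Xcal:
  assumes "I \<subseteq> {1..N}" "j \<le> Ksb C + 2"
  shows "cvg_prob M (\<lambda>n w. \<Sum>i\<in>I. scaled_Xcal i j n w) (\<Sum>i\<in>I. x i j)"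
proof (rule cvg_prob_sum[OF prob_space_M])
  show "finite I" using assms(1) finite_subset by blast
  show "(\<lambda>w. scaled_Xcal i j n w) \<in> borel_measurable (M n)" if "i \<in> I" for i n
    using measurable_sum_scaled_Xcal[of "{i}" j n] that assms by auto
  show "cvg_prob M (scaled_Xcal i j) (x i j)" if "i \<in> I" for i
    using conv that assms unfolding scaled_Xcal_def[abs_def] by auto
qed

lemma Tsum_numerator_approx:
  "\<exists>R. \<forall>\<^sub>F n in sequentially. \<forall>w\<in>space (M n).
    \<bar>(\<Sum>p=1..n + 1 - msum C. window_dev (P0 C) (fsum C) (msum C) (eps n w) p)
      - sigma (P0 C) (fsum C) (msum C) * real n * (\<Sum>i=1..N. scaled_Xcal i (Ksb C + 2) n w)\<bar> \<le> R"
proof -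
  obtain B where B: "\<forall>\<theta>\<in>space (PiM {..<msum C} (\<lambda>_. XM)). \<bar>fsum C \<theta>\<bar> \<le> B"
    using bdd_sum by blast
  let ?dev = "window_dev (P0 C) (fsum C) (msum C)"
  have "\<bar>(\<Sum>p=1..n + 1 - msum C. ?dev (eps n w) p)
      - sigma (P0 C) (fsum C) (msum C) * real n * (\<Sum>i=1..N. scaled_Xcal i (Ksb C + 2) n w)\<bar>
    \<le> (B + \<bar>Emean (P0 C) (fsum C) (msum C)\<bar>) * ((N + 1) * (2 * (N + s + 1) + 1))"
    if "msum C \<le> n" "w \<in> space (M n)" for n w
  proof -
    have "0 < n" "{0<..N} = {1..N}" using that(1) pos(1) by auto
    then have "sigma (P0 C) (fsum C) (msum C) * real n * (\<Sum>i=1..N. scaled_Xcal i (Ksb C + 2) n w)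
        = (\<Sum>i\<in>{0<..N}. \<Sum>t\<in>block_windows (n div N) h s i. \<Sum>u=1..h. ?dev (eps n w) (h * t + u))"
      by (simp only: mult_sum_scaled_Xcal sigma_mult_block_sum_fsum)
    moreover have "\<bar>?dev (eps n w) p\<bar> \<le> B + \<bar>Emean (P0 C) (fsum C) (msum C)\<bar>"
      if "1 \<le> p" "p + msum C \<le> n + 1" for p
      using abs_window_dev_le[OF B \<open>w \<in> space (M n)\<close> that] .
    ultimately show ?thesis
      using grouped_window_sum_approx[of h "msum C" s N 1 1 n "?dev (eps n w)"] pos window_lengths
        \<open>msum C \<le> n\<close> by simp
  qed
  then show ?thesis
    using eventually_ge_at_top[of "msum C"] by (blast intro: eventually_mono)
qed

lemma Tlb_numerator_approx:
  assumes "k \<in> {1..Nlb C}"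
  shows "\<exists>R. \<forall>\<^sub>F n in sequentially. \<forall>w\<in>space (M n).
    \<bar>(\<Sum>p = n div Nlb C * (k - 1) + 1..n div Nlb C * k + 1 - mlb C. window_dev (P0 C) (flb C) (mlb C) (eps n w) p)
      - sigma (P0 C) (flb C) (mlb C) * real n
        * (\<Sum>i\<in>{N div Nlb C * (k - 1)<..N div Nlb C * k}. scaled_Xcal i (Ksb C + 1) n w)\<bar> \<le> R"
proof -
  obtain B where B: "\<forall>\<theta>\<in>space (PiM {..<mlb C} (\<lambda>_. XM)). \<bar>flb C \<theta>\<bar> \<le> B"
    using bdd_lb by blast
  let ?dev = "window_dev (P0 C) (flb C) (mlb C)" and ?I = "{N div Nlb C * (k - 1)<..N div Nlb C * k}"
  have "\<bar>(\<Sum>p = n div Nlb C * (k - 1) + 1..n div Nlb C * k + 1 - mlb C. ?dev (eps n w) p)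
      - sigma (P0 C) (flb C) (mlb C) * real n * (\<Sum>i\<in>?I. scaled_Xcal i (Ksb C + 1) n w)\<bar>
    \<le> (B + \<bar>Emean (P0 C) (flb C) (mlb C)\<bar>) * ((N + 1) * (2 * (N + s + 1) + 1))"
    if "Nlb C * mlb C \<le> n" "w \<in> space (M n)" for n w
  proof -
    have "mlb C \<le> n div Nlb C"
      using that(1) pos(3) by (simp add: less_eq_div_iff_mult_less_eq mult.commute)
    then have "0 < n" using pos(2) div_le_dividend[of n "Nlb C"] by linarith
    then have "sigma (P0 C) (flb C) (mlb C) * real n * (\<Sum>i\<in>?I. scaled_Xcal i (Ksb C + 1) n w)
        = (\<Sum>i\<in>?I. \<Sum>t\<in>block_windows (n div N) h s i. \<Sum>u=1..h. ?dev (eps n w) (h * t + u))"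
      by (simp only: mult_sum_scaled_Xcal sigma_mult_block_sum_flb)
    moreover have "\<bar>?dev (eps n w) p\<bar> \<le> B + \<bar>Emean (P0 C) (flb C) (mlb C)\<bar>"
      if "1 \<le> p" "p + mlb C \<le> n + 1" for p
      using abs_window_dev_le[OF B \<open>w \<in> space (M n)\<close> that] .
    ultimately show ?thesis
      using grouped_window_sum_approx[of h "mlb C" s N "Nlb C" k n "?dev (eps n w)"] pos window_lengths
        dvd(1) assms \<open>mlb C \<le> n div Nlb C\<close> by simp
  qed
  then show ?thesis
    using eventually_ge_at_top[of "Nlb C * mlb C"] by (blast intro: eventually_mono)
qed

lemma abs_cell_dev_le:
  assumes "j \<le> Ksb C"
  shows "\<bar>cell_dev C j e q\<bar> \<le> 1"
proof -
  interpret prob_space "H0 (P0 C)"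
    unfolding H0_def using P0(1) by (intro prob_space_PiM) auto
  have "Esb C j \<le> 1" unfolding Esb_def by (rule prob_le_1)
  then show ?thesis using Esb_pos assms unfolding cell_dev_def by auto
qed

lemma Tsb_numerator_approx:
  assumes "j \<le> Ksb C"
  shows "\<exists>R. \<forall>\<^sub>F n in sequentially. \<forall>w\<in>space (M n).
    \<bar>(\<Sum>q=1..n div Lsb C. cell_dev C j (eps n w) q)
      - sqrt (Esb C j) * real n * (\<Sum>i=1..N. scaled_Xcal i j n w)\<bar> \<le> R"
proof -
  have "\<bar>(\<Sum>q=1..n div Lsb C. cell_dev C j (eps n w) q)
      - sqrt (Esb C j) * real n * (\<Sum>i=1..N. scaled_Xcal i j n w)\<bar>
    \<le> 1 * ((N + 1) * (2 * (N + s + 1) + 1))" if "0 < n" for n w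
  proof -
    have "sqrt (Esb C j) * real n * (\<Sum>i=1..N. scaled_Xcal i j n w)
        = (\<Sum>i=1..N. \<Sum>t\<in>block_windows (n div N) h s i.
            \<Sum>u=1..h div Lsb C. cell_dev C j (eps n w) (h div Lsb C * t + u))"
      using that assms by (simp only: mult_sum_scaled_Xcal sqrt_Esb_mult_block_sum)
    then show ?thesis
      using cell_window_sum_approx[of h s N "Lsb C" "cell_dev C j (eps n w)" 1 n]
        pos window_lengths dvd(2) abs_cell_dev_le[OF assms] by simp
  qed
  then show ?thesis
    using eventually_gt_at_top[of 0] by (blast intro: eventually_mono)
qed

lemma divide_sigma_sqrt_mono:
  assumes "msum C \<le> n" "0 < V"
  shows "V / (sigma (P0 C) (fsum C) (msum C) * sqrt (real n))
    \<le> V / (sigma (P0 C) (fsum C) (msum C) * sqrt (real (n + 1 - msum C)))"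
  using assms sig(1) pos(1) by (intro divide_left_mono mult_left_mono mult_pos_pos) auto

theorem Tsum_pinf:
  assumes "0 < (\<Sum>i=1..N. x i (Ksb C + 2))"
  shows "cvg_prob_pinf M (\<lambda>n w. Tsum C n (eps n w))"
proof -
  let ?V = "\<lambda>n w. \<Sum>p=1..n + 1 - msum C. window_dev (P0 C) (fsum C) (msum C) (eps n w) p"
  obtain R where R: "\<forall>\<^sub>F n in sequentially. \<forall>w\<in>space (M n).
      \<bar>?V n w - sigma (P0 C) (fsum C) (msum C) * real n * (\<Sum>i=1..N. scaled_Xcal i (Ksb C + 2) n w)\<bar> \<le> R"
    using Tsum_numerator_approx by blast
  show ?thesis
  proof (rule cvg_prob_pinf_linear_growth[OF prob_space_M _ _ assms sig(1) R])
    show "(\<lambda>w. \<Sum>i=1..N. scaled_Xcal i (Ksb C + 2) n w) \<in> borel_measurable (M n)" for n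
      by (rule measurable_sum_scaled_Xcal) auto
    show "cvg_prob M (\<lambda>n w. \<Sum>i=1..N. scaled_Xcal i (Ksb C + 2) n w) (\<Sum>i=1..N. x i (Ksb C + 2))"
      by (rule cvg_prob_sum_scaled_Xcal) auto
    show "\<forall>\<^sub>F n in sequentially. \<forall>w\<in>space (M n). 0 < ?V n w \<longrightarrow>
        ?V n w / (sigma (P0 C) (fsum C) (msum C) * sqrt (real n)) \<le> Tsum C n (eps n w)"
      using eventually_ge_at_top[of "msum C"]
    proof eventually_elim
      case (elim n)
      show ?case
        unfolding Tsum_eq_window_dev using divide_sigma_sqrt_mono[OF elim] by blast
    qed
  qed
qed

theorem Tsum_minf:
  assumes "(\<Sum>i=1..N. x i (Ksb C + 2)) < 0"
  shows "cvg_prob_minf M (\<lambda>n w. Tsum C n (eps n w))"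
proof -
  let ?V = "\<lambda>n w. \<Sum>p=1..n + 1 - msum C. window_dev (P0 C) (fsum C) (msum C) (eps n w) p"
    and ?Z = "\<lambda>n w. \<Sum>i=1..N. scaled_Xcal i (Ksb C + 2) n w"
  obtain R where R: "\<forall>\<^sub>F n in sequentially. \<forall>w\<in>space (M n).
      \<bar>?V n w - sigma (P0 C) (fsum C) (msum C) * real n * ?Z n w\<bar> \<le> R"
    using Tsum_numerator_approx by blast
  have "cvg_prob_pinf M (\<lambda>n w. - Tsum C n (eps n w))"
  proof (rule cvg_prob_pinf_linear_growth[OF prob_space_M, where V = "\<lambda>n w. - ?V n w" and Z = "\<lambda>n w. - ?Z n w"])
    show "(\<lambda>w. - ?Z n w) \<in> borel_measurable (M n)" for n
      using measurable_sum_scaled_Xcal[of "{1..N}" "Ksb C + 2" n] by simp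
    show "cvg_prob M (\<lambda>n w. - ?Z n w) (- (\<Sum>i=1..N. x i (Ksb C + 2)))"
      by (rule cvg_prob_uminus, rule cvg_prob_sum_scaled_Xcal) auto
    show "\<forall>\<^sub>F n in sequentially. \<forall>w\<in>space (M n).
        \<bar>- ?V n w - sigma (P0 C) (fsum C) (msum C) * real n * - ?Z n w\<bar> \<le> R"
      using R by eventually_elim (simp add: abs_minus_commute)
    show "\<forall>\<^sub>F n in sequentially. \<forall>w\<in>space (M n). 0 < - ?V n w \<longrightarrow>
        - ?V n w / (sigma (P0 C) (fsum C) (msum C) * sqrt (real n)) \<le> - Tsum C n (eps n w)"
      using eventually_ge_at_top[of "msum C"]
    proof eventually_elim
      case (elim n)
      show ?case
        unfolding Tsum_eq_window_dev minus_divide_left using divide_sigma_sqrt_mono[OF elim] by blast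
    qed
  qed (use assms sig(1) in auto)
  then show ?thesis by (rule cvg_prob_minfI)
qed

theorem Tlb_pinf:
  assumes k: "k \<in> {1..Nlb C}"
    and "(\<Sum>i\<in>{N div Nlb C * (k - 1)<..N div Nlb C * k}. x i (Ksb C + 1)) \<noteq> 0"
  shows "cvg_prob_pinf M (\<lambda>n w. Tlb C n (eps n w))"
proof -
  let ?I = "{N div Nlb C * (k - 1)<..N div Nlb C * k}"
    and ?V = "\<lambda>n w. \<Sum>p = n div Nlb C * (k - 1) + 1..n div Nlb C * k + 1 - mlb C.
      window_dev (P0 C) (flb C) (mlb C) (eps n w) p"
  have "N div Nlb C * k \<le> N div Nlb C * Nlb C" using k by simp
  then have I: "?I \<subseteq> {1..N}" using dvd(1) by auto
  obtain R where R: "\<forall>\<^sub>F n in sequentially. \<forall>w\<in>space (M n).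
      \<bar>?V n w - sigma (P0 C) (flb C) (mlb C) * real n * (\<Sum>i\<in>?I. scaled_Xcal i (Ksb C + 1) n w)\<bar> \<le> R"
    using Tlb_numerator_approx[OF k] by blast
  show ?thesis
  proof (rule cvg_prob_pinf_quadratic_growth[OF prob_space_M _ _ assms(2) sig(2) R])
    show "(\<lambda>w. \<Sum>i\<in>?I. scaled_Xcal i (Ksb C + 1) n w) \<in> borel_measurable (M n)" for n
      using I by (rule measurable_sum_scaled_Xcal) simp
    show "cvg_prob M (\<lambda>n w. \<Sum>i\<in>?I. scaled_Xcal i (Ksb C + 1) n w) (\<Sum>i\<in>?I. x i (Ksb C + 1))"
      using I by (rule cvg_prob_sum_scaled_Xcal) simp
    show "\<forall>\<^sub>F n in sequentially. 0 < real (n div Nlb C) \<and> real (n div Nlb C) \<le> real n \<and>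
        (\<forall>w\<in>space (M n). (?V n w)\<^sup>2 / (real (n div Nlb C) * (sigma (P0 C) (flb C) (mlb C))\<^sup>2)
          \<le> Tlb C n (eps n w))"
      using eventually_ge_at_top[of "Nlb C * mlb C"]
    proof eventually_elim
      case (elim n)
      then have "mlb C \<le> n div Nlb C"
        using pos(3) by (simp add: less_eq_div_iff_mult_less_eq mult.commute)
      moreover have "(?V n w)\<^sup>2 / (real (n div Nlb C) * (sigma (P0 C) (flb C) (mlb C))\<^sup>2)
          \<le> Tlb C n (eps n w)" for w
        using Tlb_ge_summand[OF k, of n "eps n w"] k \<open>mlb C \<le> n div Nlb C\<close>
        by (simp only: Wlb_eq_window_dev atLeastAtMost_iff)
      ultimately show ?case
        using pos(2) by auto
    qed
  qed
qed

theorem Tsb_pinf: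
  assumes j: "j \<le> Ksb C" and "(\<Sum>i=1..N. x i j) \<noteq> 0"
  shows "cvg_prob_pinf M (\<lambda>n w. Tsb C n (eps n w))"
proof -
  let ?V = "\<lambda>n w. \<Sum>q=1..n div Lsb C. cell_dev C j (eps n w) q"
  obtain R where R: "\<forall>\<^sub>F n in sequentially. \<forall>w\<in>space (M n).
      \<bar>?V n w - sqrt (Esb C j) * real n * (\<Sum>i=1..N. scaled_Xcal i j n w)\<bar> \<le> R"
    using Tsb_numerator_approx[OF j] by blast
  have "0 < Esb C j" using Esb_pos j by blast
  show ?thesis
  proof (rule cvg_prob_pinf_quadratic_growth[OF prob_space_M _ _ assms(2) _ R])
    show "(\<lambda>w. \<Sum>i=1..N. scaled_Xcal i j n w) \<in> borel_measurable (M n)" for n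
      using j by (intro measurable_sum_scaled_Xcal) auto
    show "cvg_prob M (\<lambda>n w. \<Sum>i=1..N. scaled_Xcal i j n w) (\<Sum>i=1..N. x i j)"
      using j by (intro cvg_prob_sum_scaled_Xcal) auto
    show "0 < sqrt (Esb C j)" using \<open>0 < Esb C j\<close> by simp
    show "\<forall>\<^sub>F n in sequentially. 0 < real (n div Lsb C) \<and> real (n div Lsb C) \<le> real n \<and>
        (\<forall>w\<in>space (M n). (?V n w)\<^sup>2 / (real (n div Lsb C) * (sqrt (Esb C j))\<^sup>2) \<le> Tsb C n (eps n w))"
      using eventually_ge_at_top[of "Lsb C"]
    proof eventually_elim
      case (elim n)
      have "(?V n w)\<^sup>2 / (real (n div Lsb C) * (sqrt (Esb C j))\<^sup>2) \<le> Tsb C n (eps n w)" for w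
        using Tsb_ge_summand[OF j, of n "eps n w"] \<open>0 < Esb C j\<close>
        unfolding wsb_eq_cell_dev by simp
      moreover have "0 < n div Lsb C"
        using elim pos(4) by (simp add: div_greater_zero_iff)
      ultimately show ?case by simp
    qed
  qed
qed

end

lemma sum_consecutive_groups:
  fixes f :: "nat \<Rightarrow> 'a::comm_monoid_add"
  shows "(\<Sum>k=1..a. \<Sum>i=1..b. f (b * (k - 1) + i)) = (\<Sum>i=1..a * b. f i)"
proof (induction a)
  case (Suc a)
  have "(\<Sum>i=1..b. f (b * a + i)) = (\<Sum>i=a * b + 1..a * b + b. f i)"
    using sum.shift_bounds_cl_nat_ivl[of f 1 "a * b" b] by (simp add: add.commute mult.commute)
  moreover have "(\<Sum>i=1..a * b + b. f i) = (\<Sum>i=1..a * b. f i) + (\<Sum>i=a * b + 1..a * b + b. f i)"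
    by (rule sum.ub_add_nat) simp
  ultimately show ?case
    using Suc by (simp add: add.commute)
qed simp

lemma sum_group_eq_greaterThanAtMost:
  fixes f :: "nat \<Rightarrow> 'a::comm_monoid_add"
  assumes "1 \<le> k"
  shows "(\<Sum>i=1..b. f (b * (k - 1) + i)) = (\<Sum>i\<in>{b * (k - 1)<..b * k}. f i)"
proof -
  have "{b * (k - 1)<..b * k} = {1 + b * (k - 1)..b + b * (k - 1)}"
    using assms by (cases k) auto
  then show ?thesis
    using sum.shift_bounds_cl_nat_ivl[of f 1 "b * (k - 1)" b] by (simp add: add.commute)
qed

context window_statistics
begin

lemma Tlb_pinf_sum_squares:
  assumes "(\<Sum>k=1..Nlb C. (\<Sum>i=1..N div Nlb C. x (N div Nlb C * (k - 1) + i) (Ksb C + 1))\<^sup>2) \<noteq> 0"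
  shows "cvg_prob_pinf M (\<lambda>n w. Tlb C n (eps n w))"
proof -
  obtain k where k: "k \<in> {1..Nlb C}" "(\<Sum>i=1..N div Nlb C. x (N div Nlb C * (k - 1) + i) (Ksb C + 1)) \<noteq> 0"
    using sum.not_neutral_contains_not_neutral[OF assms] by auto
  then show ?thesis
    using Tlb_pinf[OF k(1)] sum_group_eq_greaterThanAtMost[of k "\<lambda>i. x i (Ksb C + 1)"] by simp
qed

lemma Tsb_pinf_sum_squares:
  assumes "(\<Sum>j=0..Ksb C. (\<Sum>i=1..N. x i j)\<^sup>2) \<noteq> 0"
  shows "cvg_prob_pinf M (\<lambda>n w. Tsb C n (eps n w))"
proof -
  obtain j where "j \<le> Ksb C" "(\<Sum>i=1..N. x i j) \<noteq> 0"
    using sum.not_neutral_contains_not_neutral[OF assms] by auto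
  then show ?thesis by (rule Tsb_pinf)
qed

end

theorem lemma1:
  fixes C :: "('a::euclidean_space) cfg"
    and Xset :: "'a set"
    and N s h :: nat
    and M :: "nat \<Rightarrow> 'b measure"
    and eps :: "nat \<Rightarrow> 'b \<Rightarrow> nat \<Rightarrow> 'a"
    and x :: "nat \<Rightarrow> nat \<Rightarrow> real"
  defines "XM \<equiv> restrict_space borel Xset"
  assumes P0: "prob_space (P0 C)" "sets (P0 C) = sets XM"
    and pos: "0 < msum C" "0 < mlb C" "0 < Nlb C" "0 < Lsb C" "0 < Ksb C" "0 < N" "0 < h"
    and meas_sum: "fsum C \<in> borel_measurable (PiM {..<msum C} (\<lambda>_. XM))"
    and meas_lb: "flb C \<in> borel_measurable (PiM {..<mlb C} (\<lambda>_. XM))"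
    and meas_sb: "fsb C \<in> borel_measurable (PiM {..<Lsb C} (\<lambda>_. XM))"
    and bdd_sum: "\<exists>B. \<forall>\<theta>\<in>space (PiM {..<msum C} (\<lambda>_. XM)). \<bar>fsum C \<theta>\<bar> \<le> B"
    and bdd_lb: "\<exists>B. \<forall>\<theta>\<in>space (PiM {..<mlb C} (\<lambda>_. XM)). \<bar>flb C \<theta>\<bar> \<le> B"
    and alpha: "\<forall>j\<le>Ksb C. alpha C j \<in> sets borel \<and> alpha C j \<noteq> {}"
      "disjoint_family_on (alpha C) {0..Ksb C}"
      "(\<Union>j\<le>Ksb C. alpha C j) = fsb C ` space (PiM {..<Lsb C} (\<lambda>_. XM))"
    and sig: "0 < sigma (P0 C) (fsum C) (msum C)" "0 < sigma (P0 C) (flb C) (mlb C)"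
    and Esb_pos: "\<forall>j\<le>Ksb C. 0 < Esb C j"
    and s_ge: "s \<ge> h + max (msum C) (mlb C) - 1"
    and dvd: "Nlb C dvd N" "Lsb C dvd h"
    and scheme: "\<forall>n. prob_space (M n)"
      "\<forall>n. \<forall>i\<in>{1..n}. (\<lambda>w. eps n w i) \<in> measurable (M n) XM"
    and conv: "\<forall>i\<in>{1..N}. \<forall>j\<le>Ksb C + 2.
        cvg_prob M (\<lambda>n w. Xcal C N s h n i j (eps n w) / sqrt (real n)) (x i j)"
  shows
    "let y = (\<lambda>k j. \<Sum>i=1..N div Nlb C. x (N div Nlb C * (k - 1) + i) j);
         c_sum = (\<Sum>k=1..Nlb C. y k (Ksb C + 2));
         c_lb = (\<Sum>k=1..Nlb C. (y k (Ksb C + 1))\<^sup>2);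
         c_sb = (\<Sum>j=0..Ksb C. (\<Sum>k=1..Nlb C. y k j)\<^sup>2)
     in (c_sum > 0 \<longrightarrow> cvg_prob_pinf M (\<lambda>n w. Tsum C n (eps n w)))
      \<and> (c_sum < 0 \<longrightarrow> cvg_prob_minf M (\<lambda>n w. Tsum C n (eps n w)))
      \<and> (c_lb \<noteq> 0 \<longrightarrow> cvg_prob_pinf M (\<lambda>n w. Tlb C n (eps n w)))
      \<and> (c_sb \<noteq> 0 \<longrightarrow> cvg_prob_pinf M (\<lambda>n w. Tsb C n (eps n w)))"
proof -
  \<comment> \<open>Each lower bound uses a single cell of the partition.\<close>
  have "\<forall>j\<le>Ksb C. alpha C j \<in> sets borel"
    using alpha(1) by blast
  then interpret window_statistics C N s h M eps XM x
    using P0 pos(1-4,6,7) meas_sum meas_lb meas_sb bdd_sum bdd_lb sig Esb_pos s_ge dvd scheme conv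
    unfolding window_statistics_def by (intro conjI) assumption+
  have total: "(\<Sum>k=1..Nlb C. \<Sum>i=1..N div Nlb C. x (N div Nlb C * (k - 1) + i) j) = (\<Sum>i=1..N. x i j)"
    for j using sum_consecutive_groups[where f = "\<lambda>i. x i j" and a = "Nlb C" and b = "N div Nlb C"] dvd(1) by simp
  show ?thesis
    unfolding Let_def total
    using Tsum_pinf Tsum_minf Tlb_pinf_sum_squares Tsb_pinf_sum_squares by blast
qed

end
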